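(* Let $L$ be a positive integer, $\epsilon\in(0,1)$, and let $\mathbf a,\mathbf b\in\mathbb R^n$ be nonzero vectors such that for all $i$, $\mathbf a[i]^2/\|\mathbf a\|^2$ and $\mathbf b[i]^2/\|\mathbf b\|^2$ are integer multiples of $1/L$. There is an absolute constant $C$ such that if $m\ge C/\epsilon^2$, then the Weighted MinHash sketches $W_{\mathbf a},W_{\mathbf b}$ computed with sample size $m$, discretization parameter $L$ and a common random seed satisfy, with probability at least $2/3$, $$|\mathcal F(W_{\mathbf a},W_{\mathbf b})-\langle\mathbf a,\mathbf b\rangle|\le\epsilon\max\left(\|\mathbf a_{\mathcal I}\|\|\mathbf b\|,\ \|\mathbf a\|\|\mathbf b_{\mathcal I}\|\right),$$ where $\mathcal I=\{i:\mathbf a[i]\neq0\text{ and }\mathbf b[i]\neq0\}$ and $\mathcal F$ is the Weighted MinHash estimator.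
   Context: $\|\cdot\|$ is the Euclidean norm, $\langle\cdot,\cdot\rangle$ the standard inner product, and $\mathbf a_{\mathcal I}$ is $\mathbf a$ restricted to indices in $\mathcal I$. Fully random hash functions (independent uniform values in $[0,1]$) are assumed. Rounding procedure $\textsc{Round}(\mathbf z,L)$ for a unit vector $\mathbf z\in\mathbb R^n$: set $\tilde{\mathbf z}[i]=\operatorname{sign}(\mathbf z[i])\sqrt{\lfloor \mathbf z[i]^2L\rfloor/L}$ for all $i$; let $i^*=\arg\max_i|\mathbf z[i]|$; set $\delta=1-\|\tilde{\mathbf z}\|^2$ and replace $\tilde{\mathbf z}[i^*]$ by $\operatorname{sign}(\mathbf z[i^*])\sqrt{\tilde{\mathbf z}[i^*]^2+\delta}$; return $\tilde{\mathbf z}$. Weighted MinHash sketch of $\mathbf a$ (sample number $m$, seed $s$, integer $L$): set $\tilde{\mathbf a}=\textsc{Round}(\mathbf a/\|\mathbf a\|,L)$. For each $i\in\{1,\dots,n\}$ let $\bar{\mathbf a}^{(i)}\in\mathbb R^L$ have its first $\tilde{\mathbf a}[i]^2L$ entries equal to $\tilde{\mathbf a}[i]$ and the rest $0$, and let $\bar{\mathbf a}=[\bar{\mathbf a}^{(1)},\dots,\bar{\mathbf a}^{(n)}]\in\mathbb R^{nL}$. For $i=1,\dots,m$, using the seed $s$ select an independent fully random hash function $h^i:\{1,\dots,nL\}\to[0,1]$ (the same functions for all vectors sketched with seed $s$), let $j^*=\arg\min_{j:\bar{\mathbf a}[j]\neq0}h^i(j)$, and set $W^{hash}_{\mathbf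 a}[i]=h^i(j^* )$, $W^{val}_{\mathbf a}[i]=\bar{\mathbf a}[j^*]$. The sketch is $W_{\mathbf a}=\{W^{hash}_{\mathbf a},W^{val}_{\mathbf a},\|\mathbf a\|\}$. Weighted MinHash estimator $\mathcal F(W_{\mathbf a},W_{\mathbf b})$: set $q_i=\min(W^{val}_{\mathbf a}[i]^2,W^{val}_{\mathbf b}[i]^2)$, $\tilde M=\frac1L\left(\frac{m}{\sum_{i=1}^m\min(W^{hash}_{\mathbf a}[i],W^{hash}_{\mathbf b}[i])}-1\right)$, $I=\frac{\tilde M}{m}\sum_{i=1}^m\mathbb 1[W^{hash}_{\mathbf a}[i]=W^{hash}_{\mathbf b}[i]]\frac{W^{val}_{\mathbf a}[i]W^{val}_{\mathbf b}[i]}{q_i}$, and return $\|\mathbf a\|\|\mathbf b\|\cdot I$. *)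

theory Defs
  imports "HOL-Probability.Probability"
begin

text \<open>Vectors in R^n are functions nat => real, indexed by 0..<n (0-based).\<close>

definition vnorm :: "nat \<Rightarrow> (nat \<Rightarrow> real) \<Rightarrow> real" where
  "vnorm n a = sqrt (\<Sum>i<n. (a i)^2)"

definition vinner :: "nat \<Rightarrow> (nat \<Rightarrow> real) \<Rightarrow> (nat \<Rightarrow> real) \<Rightarrow> real" where
  "vinner n a b = (\<Sum>i<n. a i * b i)"

definition restr_norm :: "nat set \<Rightarrow> (nat \<Rightarrow> real) \<Rightarrow> real" where
  "restr_norm I a = sqrt (\<Sum>i\<in>I. (a i)^2)"

definition round_vec :: "nat \<Rightarrow> nat \<Rightarrow> (nat \<Rightarrow> real) \<Rightarrow> nat \<Rightarrow> real" where
  "round_vec n L z = (let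
      zt = (\<lambda>i. sgn (z i) * sqrt (real_of_int \<lfloor>(z i)^2 * real L\<rfloor> / real L));
      istar = (LEAST i. i < n \<and> (\<forall>j<n. \<bar>z j\<bar> \<le> \<bar>z i\<bar>));
      \<delta> = 1 - (\<Sum>i<n. (zt i)^2)
    in (\<lambda>i. if i = istar then sgn (z istar) * sqrt ((zt istar)^2 + \<delta>) else zt i))"

text \<open>Expanded vector in R^{nL}: index j = i*L + k (k < L) belongs to block i;
  the first (at i)^2 * L entries of block i equal zr i, the rest are 0.\<close>
definition expand_vec :: "nat \<Rightarrow> (nat \<Rightarrow> real) \<Rightarrow> nat \<Rightarrow> real" where
  "expand_vec L zr j = (if real (j mod L) < (zr (j div L))^2 * real L then zr (j div L) else 0)"

definition abar :: "nat \<Rightarrow> nat \<Rightarrow> (nat \<Rightarrow> real) \<Rightarrow> nat \<Rightarrow> real" where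
  "abar n L a = expand_vec L (round_vec n L (\<lambda>i. a i / vnorm n a))"

definition abar_supp :: "nat \<Rightarrow> nat \<Rightarrow> (nat \<Rightarrow> real) \<Rightarrow> nat set" where
  "abar_supp n L a = {j. j < n * L \<and> abar n L a j \<noteq> 0}"

text \<open>Hash values: h (i, j) = h^i(j) for sample i < m and j < n*L.\<close>
definition wmh_hash :: "nat \<Rightarrow> nat \<Rightarrow> (nat \<Rightarrow> real) \<Rightarrow> (nat \<times> nat \<Rightarrow> real) \<Rightarrow> nat \<Rightarrow> real" where
  "wmh_hash n L a h i = Min ((\<lambda>j. h (i, j)) ` abar_supp n L a)"

definition wmh_val :: "nat \<Rightarrow> nat \<Rightarrow> (nat \<Rightarrow> real) \<Rightarrow> (nat \<times> nat \<Rightarrow> real) \<Rightarrow> nat \<Rightarrow> real" where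
  "wmh_val n L a h i = abar n L a (ARG_MIN (\<lambda>j. h (i, j)) j. j \<in> abar_supp n L a)"

definition wmh_sketch :: "nat \<Rightarrow> nat \<Rightarrow> (nat \<Rightarrow> real) \<Rightarrow> (nat \<times> nat \<Rightarrow> real)
    \<Rightarrow> (nat \<Rightarrow> real) \<times> (nat \<Rightarrow> real) \<times> real" where
  "wmh_sketch n L a h = (wmh_hash n L a h, wmh_val n L a h, vnorm n a)"

definition wmh_estimate :: "nat \<Rightarrow> nat \<Rightarrow> (nat \<Rightarrow> real) \<times> (nat \<Rightarrow> real) \<times> real
    \<Rightarrow> (nat \<Rightarrow> real) \<times> (nat \<Rightarrow> real) \<times> real \<Rightarrow> real" where
  "wmh_estimate m L Wa Wb = (case Wa of (ha, va, na) \<Rightarrow> case Wb of (hb, vb, nb) \<Rightarrow>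
     (let q = (\<lambda>i. min ((va i)^2) ((vb i)^2));
          Mt = (1 / real L) * (real m / (\<Sum>i<m. min (ha i) (hb i)) - 1);
          I = Mt / real m * (\<Sum>i<m. (if ha i = hb i then 1 else 0) * (va i * vb i / q i))
      in na * nb * I))"

text \<open>The random seed: m independent fully random hash functions
  {0..<n*L} -> [0,1], i.e. i.i.d. uniform values indexed by {0..<m} x {0..<n*L}.\<close>
definition hash_space :: "nat \<Rightarrow> nat \<Rightarrow> nat \<Rightarrow> (nat \<times> nat \<Rightarrow> real) measure" where
  "hash_space m n L = PiM ({0..<m} \<times> {0..<n * L}) (\<lambda>_. uniform_measure lborel {0..1})"

end

(*
  Under the hypothesis on the entries the rounding step is exact, so the expanded vector of a
  consists of n blocks of length L, block i holding alpha_i^2 L copies of alpha_i = a_i / ||a||.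
  In every sample the hash function almost surely has a strict minimum over the union U of the
  two supports, say at j. Then min (W_a^hash, W_b^hash) is that minimum, and the summand of the
  estimator is a weight ratio(j) that vanishes unless j lies in both supports. Hence the
  estimator is a function of two sample means of i.i.d. variables: the minima, with mean
  1/(|U| + 1), and the weights at the uniformly distributed index j, with mean L <alpha, beta> / |U|
  and second moment L (sum over I of max (alpha_i^2, beta_i^2)) / |U|. As L <= |U| <= 2 L,
  Chebyshev's inequality with m >= 6144 / epsilon^2 makes both means accurate at once with
  probability at least 2/3, and then the estimator is within the claimed error.
*)
theory Submission
  imports Defs
begin

section \<open>Beta integrals\<close>

lemma has_integral_one_minus_power:
  "((\<lambda>t::real. (1 - t) ^ k) has_integral 1 / (real k + 1)) {0..1}"
proof -
  have "((\<lambda>t. - ((1 - t) ^ Suc k) / (real k + 1)) has_real_derivative (1 - t) ^ k) (at t within {0..1})"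
    for t :: real
    by (auto intro!: derivative_eq_intros simp del: power_Suc simp add: add.commute)
  then have "((\<lambda>t. (1 - t) ^ k) has_integral
      (- ((1 - 1) ^ Suc k) / (real k + 1)) - (- ((1 - 0) ^ Suc k) / (real k + 1))) {0..1}"
    by (intro fundamental_theorem_of_calculus) (auto simp flip: has_real_derivative_iff_has_vector_derivative)
  then show ?thesis by simp
qed

lemma has_integral_t_one_minus_power:
  "((\<lambda>t::real. t * (1 - t) ^ k) has_integral 1 / ((real k + 1) * (real k + 2))) {0..1}"
proof -
  have "((\<lambda>t::real. (1 - t) ^ k - (1 - t) ^ Suc k) has_integral
      1 / (real k + 1) - 1 / (real (Suc k) + 1)) {0..1}"
    by (intro has_integral_diff has_integral_one_minus_power)
  moreover have "(\<lambda>t::real. (1 - t) ^ k - (1 - t) ^ Suc k) = (\<lambda>t. t * (1 - t) ^ k)"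
    by (auto simp: algebra_simps)
  moreover have "1 / (real k + 1) - 1 / (real (Suc k) + 1) = 1 / ((real k + 1) * (real k + 2))"
    by (simp add: field_simps)
  ultimately show ?thesis by simp
qed

lemma has_integral_t_sq_one_minus_power:
  "((\<lambda>t::real. t\<^sup>2 * (1 - t) ^ k) has_integral 2 / ((real k + 1) * (real k + 2) * (real k + 3))) {0..1}"
proof -
  have "((\<lambda>t::real. (1 - t) ^ k - 2 * (1 - t) ^ (k + 1) + (1 - t) ^ (k + 2)) has_integral
      1 / (real k + 1) - 2 * (1 / (real (k + 1) + 1)) + 1 / (real (k + 2) + 1)) {0..1}"
    by (intro has_integral_diff has_integral_add has_integral_mult_right has_integral_one_minus_power)
  moreover have "(\<lambda>t::real. (1 - t) ^ k - 2 * (1 - t) ^ (k + 1) + (1 - t) ^ (k + 2)) = (\<lambda>t. t\<^sup>2 * (1 - t) ^ k)"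
    by (auto simp: algebra_simps power2_eq_square)
  moreover have "1 / (real k + 1) - 2 * (1 / (real (k + 1) + 1)) + 1 / (real (k + 2) + 1)
      = 2 / ((real k + 1) * (real k + 2) * (real k + 3))"
    by (simp add: divide_simps) (simp add: algebra_simps)
  ultimately show ?thesis by simp
qed

section \<open>The strict minimum of independent uniform variables\<close>

abbreviation uniform01 :: "real measure" where
  "uniform01 \<equiv> uniform_measure lborel {0..1}"

lemma prob_space_uniform01: "prob_space uniform01"
  by (rule prob_space_uniform_measure) auto

lemma emeasure_uniform01_greaterThan:
  assumes "0 \<le> y" "y \<le> 1"
  shows "emeasure uniform01 {y<..} = ennreal (1 - y)"
proof -
  have "{0..1} \<inter> {y<..} = {y<..1}" using assms by auto
  then show ?thesis using assms by (simp add: emeasure_uniform_measure divide_ennreal_def)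
qed

definition strict_min_at :: "'k set \<Rightarrow> ('k \<Rightarrow> real) \<Rightarrow> 'k \<Rightarrow> bool" where
  "strict_min_at U x j \<longleftrightarrow> j \<in> U \<and> (\<forall>k\<in>U - {j}. x j < x k)"

lemma strict_min_at_unique: "strict_min_at U x j \<Longrightarrow> strict_min_at U x j' \<Longrightarrow> j = j'"
  unfolding strict_min_at_def by (metis DiffI less_asym singletonD)

lemma strict_min_at_less: "strict_min_at U x j \<Longrightarrow> k \<in> U \<Longrightarrow> k \<noteq> j \<Longrightarrow> x j < x k"
  unfolding strict_min_at_def by blast

lemma Min_image_strict_min_at:
  assumes "finite S" "S \<subseteq> U" "j \<in> S" "strict_min_at U x j"
  shows "Min (x ` S) = x j"
  using assms strict_min_at_less[OF assms(4)] by (intro Min_eqI) (auto intro: less_imp_le)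

lemma Min_image_gt_strict_min_at:
  assumes "finite S" "S \<subseteq> U" "S \<noteq> {}" "j \<notin> S" "strict_min_at U x j"
  shows "x j < Min (x ` S)"
  using assms strict_min_at_less[OF assms(5)] by (subst Min_gr_iff) auto

lemma arg_min_strict_min_at:
  assumes "S \<subseteq> U" "j \<in> S" "strict_min_at U x j"
  shows "(ARG_MIN x k. k \<in> S) = j"
  by (rule arg_minI[where P = "\<lambda>k. k \<in> S" and Q = "\<lambda>k. k = j"])
    (use assms strict_min_at_less[OF assms(3)] in \<open>auto dest: less_asym\<close>)

text \<open>The value of \<open>f\<close> at the strict minimiser of \<open>x\<close> on \<open>U\<close>, and 0 if the minimum is not strict;
  the sum form makes it linear in \<open>f\<close>.\<close>
definition at_strict_min :: "'k set \<Rightarrow> ('k \<Rightarrow> real) \<Rightarrow> ('k \<Rightarrow> real) \<Rightarrow> real" where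
  "at_strict_min U x f = (\<Sum>j\<in>U. if strict_min_at U x j then f j else 0)"

lemma at_strict_min_eq:
  assumes "finite U" "strict_min_at U x j"
  shows "at_strict_min U x f = f j"
proof -
  have "at_strict_min U x f = (\<Sum>k\<in>U. if k = j then f k else 0)"
    unfolding at_strict_min_def using assms(2) by (intro sum.cong) (auto dest: strict_min_at_unique)
  then show ?thesis using assms by (simp add: strict_min_at_def)
qed

lemma at_strict_min_eq_0: "\<nexists>j. strict_min_at U x j \<Longrightarrow> at_strict_min U x f = 0"
  unfolding at_strict_min_def by simp

lemma at_strict_min_square:
  "finite U \<Longrightarrow> (at_strict_min U x f)\<^sup>2 = at_strict_min U x (\<lambda>j. (f j)\<^sup>2)"
  by (cases "\<exists>j. strict_min_at U x j") (auto simp: at_strict_min_eq at_strict_min_eq_0)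

lemma at_strict_min_cong:
  "(\<And>k. k \<in> U \<Longrightarrow> x k = y k) \<Longrightarrow> (\<And>k. k \<in> U \<Longrightarrow> f k = g k)
    \<Longrightarrow> at_strict_min U x f = at_strict_min U y g"
  unfolding at_strict_min_def strict_min_at_def by (intro sum.cong) auto

lemma pred_strict_min_at:
  assumes "finite U" and "\<And>k. k \<in> U \<Longrightarrow> (\<lambda>\<omega>. x \<omega> k) \<in> borel_measurable M"
  shows "Measurable.pred M (\<lambda>\<omega>. strict_min_at U (x \<omega>) j)"
proof -
  have [measurable]: "Measurable.pred M (\<lambda>\<omega>. x \<omega> j < x \<omega> k)" if "j \<in> U" "k \<in> U" for k
    using assms(2)[OF that(1)] assms(2)[OF that(2)] unfolding Measurable.pred_def by (rule borel_measurable_less)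
  have "Measurable.pred M (\<lambda>\<omega>. \<forall>k\<in>U - {j}. x \<omega> j < x \<omega> k)" if "j \<in> U"
    using assms(1) that by (intro pred_intros_finite(3)) auto
  then show ?thesis
    unfolding strict_min_at_def by (cases "j \<in> U") simp_all
qed

lemma measurable_component_uniform01[measurable]:
  "p \<in> K \<Longrightarrow> (\<lambda>\<omega>. \<omega> p) \<in> borel_measurable (PiM K (\<lambda>_. uniform01))"
  using measurable_component_singleton[of p K "\<lambda>_. uniform01"]
  by (simp add: measurable_cong_sets[OF refl sets_uniform_measure])

lemma pred_strict_min_at_row:
  assumes "finite U" "{i} \<times> U \<subseteq> K"
  shows "Measurable.pred (PiM K (\<lambda>_. uniform01)) (\<lambda>\<omega>. strict_min_at U (\<lambda>k. \<omega> (i, k)) j)"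
  using assms by (intro pred_strict_min_at measurable_component_uniform01) auto

lemma emeasure_PiM_uniform01_greater:
  fixes K V :: "'k set"
  assumes "finite K" "V \<subseteq> K"
  shows "emeasure (PiM K (\<lambda>_. uniform01)) (PiE K (\<lambda>k. if k \<in> V then {y<..} else UNIV))
    = emeasure uniform01 {y<..} ^ card V"
proof -
  interpret product_prob_space "\<lambda>_::'k. uniform01" K
    by (simp add: product_prob_space_def product_prob_space_axioms_def product_sigma_finite_def
        prob_space_uniform01 prob_space_imp_sigma_finite)
  have "emeasure (PiM K (\<lambda>_. uniform01)) (PiE K (\<lambda>k. if k \<in> V then {y<..} else UNIV))
      = (\<Prod>k\<in>K. emeasure uniform01 (if k \<in> V then {y<..} else UNIV))"
    using assms(1) by (simp add: emeasure_PiM)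
  also have "\<dots> = (\<Prod>k\<in>V. emeasure uniform01 {y<..})"
    using assms prob_space.emeasure_space_1[OF prob_space_uniform01]
    by (intro prod.mono_neutral_cong_right) auto
  finally show ?thesis by simp
qed

text \<open>Integrating out \<open>\<omega> j = t\<close> last: the other coordinates in \<open>U\<close> must all exceed \<open>t\<close>,
  which has probability \<open>(1 - t) ^ (card U - 1)\<close>.\<close>
lemma nn_integral_strict_min_at:
  fixes K U :: "'k set"
  assumes K: "finite K" "U \<subseteq> K" "j \<in> U"
    and V: "((\<lambda>t. t ^ r * (1 - t) ^ card (U - {j})) has_integral V) {0..1}"
  shows "(\<integral>\<^sup>+\<omega>. ennreal (if strict_min_at U \<omega> j then \<omega> j ^ r else 0) \<partial>PiM K (\<lambda>_. uniform01))
    = ennreal V"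
proof -
  have [measurable]: "Measurable.pred (PiM K (\<lambda>_. uniform01)) (\<lambda>\<omega>. strict_min_at U \<omega> j)"
    using K finite_subset by (intro pred_strict_min_at measurable_component_uniform01) auto
  have meas: "(\<lambda>\<omega>. ennreal (if strict_min_at U \<omega> j then \<omega> j ^ r else 0))
      \<in> borel_measurable (PiM K (\<lambda>_. uniform01))"
    by measurable (use K in auto)
  interpret product_prob_space "\<lambda>_::'k. uniform01" K
    by (simp add: product_prob_space_def product_prob_space_axioms_def product_sigma_finite_def
        prob_space_uniform01 prob_space_imp_sigma_finite)
  define K' where "K' = K - {j}"
  define A where "A y k = (if k \<in> U - {j} then {y<..} else UNIV)" for y :: real and k
  have K_eq: "K = insert j K'" and K': "finite K'" "j \<notin> K'" "U - {j} \<subseteq> K'"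
    using K by (auto simp: K'_def)
  have inner: "(\<integral>\<^sup>+x. ennreal (if strict_min_at U (x(j := y)) j then (x(j := y)) j ^ r else 0)
      \<partial>PiM K' (\<lambda>_. uniform01)) = ennreal (y ^ r) * emeasure uniform01 {y<..} ^ card (U - {j})"
    for y
  proof -
    have "(\<integral>\<^sup>+x. ennreal (if strict_min_at U (x(j := y)) j then (x(j := y)) j ^ r else 0)
        \<partial>PiM K' (\<lambda>_. uniform01))
      = (\<integral>\<^sup>+x. ennreal (y ^ r) * indicator (PiE K' (A y)) x \<partial>PiM K' (\<lambda>_. uniform01))"
      using K K' by (intro nn_integral_cong)
        (auto simp: strict_min_at_def space_PiM A_def PiE_iff indicator_def)
    also have "\<dots> = ennreal (y ^ r) * emeasure (PiM K' (\<lambda>_. uniform01)) (PiE K' (A y))"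
      using K' by (intro nn_integral_cmult_indicator sets_PiM_I_finite) (auto simp: A_def)
    also have "\<dots> = ennreal (y ^ r) * emeasure uniform01 {y<..} ^ card (U - {j})"
      unfolding A_def using K' by (subst emeasure_PiM_uniform01_greater) auto
    finally show ?thesis .
  qed
  have "(\<integral>\<^sup>+\<omega>. ennreal (if strict_min_at U \<omega> j then \<omega> j ^ r else 0) \<partial>PiM K (\<lambda>_. uniform01))
      = (\<integral>\<^sup>+y. (\<integral>\<^sup>+x. ennreal (if strict_min_at U (x(j := y)) j then (x(j := y)) j ^ r else 0)
          \<partial>PiM K' (\<lambda>_. uniform01)) \<partial>uniform01)"
    using meas unfolding K_eq by (rule product_nn_integral_insert_rev[OF K'(1,2)])
  also have "\<dots> = (\<integral>\<^sup>+y. ennreal (y ^ r) * emeasure uniform01 {y<..} ^ card (U - {j}) \<partial>uniform01)"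
    by (simp only: inner)
  also have "\<dots> = (\<integral>\<^sup>+y. ennreal (y ^ r * (1 - y) ^ card (U - {j})) \<partial>uniform01)"
  proof (rule nn_integral_cong_AE)
    have "AE y in uniform01. y \<in> {0..1}" by (rule AE_uniform_measureI) auto
    then show "AE y in uniform01. ennreal (y ^ r) * emeasure uniform01 {y<..} ^ card (U - {j})
        = ennreal (y ^ r * (1 - y) ^ card (U - {j}))"
      by eventually_elim
        (simp add: emeasure_uniform01_greaterThan ennreal_mult ennreal_power del: emeasure_uniform_measure)
  qed
  also have "\<dots> = (\<integral>\<^sup>+y. ennreal (y ^ r * (1 - y) ^ card (U - {j})) * indicator {0..1} y \<partial>lborel)"
    by (subst nn_integral_uniform_measure) (auto simp: divide_ennreal_def)
  also have "\<dots> = ennreal V"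
    by (rule nn_integral_has_integral_lebesgue'[OF _ V]) auto
  finally show ?thesis .
qed

locale uniform_rows =
  fixes I :: "'r set" and J :: "'k set" and U :: "'k set"
  assumes finite_I: "finite I" and finite_J: "finite J" and U_subset: "U \<subseteq> J" and U_nonempty: "U \<noteq> {}"
begin

abbreviation P :: "('r \<times> 'k \<Rightarrow> real) measure" where
  "P \<equiv> PiM (I \<times> J) (\<lambda>_. uniform01)"

sublocale prob_space P
  by (rule prob_space_PiM) (rule prob_space_uniform01)

lemma finite_U: "finite U"
  using finite_J U_subset finite_subset by blast

lemma card_U_pos: "card U > 0"
  using finite_U U_nonempty by (simp add: card_gt_0_iff)

lemma AE_coordinate_01: "i \<in> I \<Longrightarrow> k \<in> J \<Longrightarrow> AE \<omega> in P. 0 \<le> \<omega> (i, k) \<and> \<omega> (i, k) \<le> 1"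
proof -
  assume ik: "i \<in> I" "k \<in> J"
  interpret product_prob_space "\<lambda>_. uniform01" "I \<times> J"
    by (simp add: product_prob_space_def product_prob_space_axioms_def product_sigma_finite_def
        prob_space_uniform01 prob_space_imp_sigma_finite)
  have "AE x in uniform01. 0 \<le> x \<and> x \<le> 1" by (rule AE_uniform_measureI) auto
  then show ?thesis using ik by (intro AE_component) auto
qed

lemma moment_strict_min_at_row:
  assumes i: "i \<in> I" and j: "j \<in> U"
    and V: "((\<lambda>t. t ^ r * (1 - t) ^ (card U - 1)) has_integral V) {0..1}"
  defines "g \<equiv> \<lambda>\<omega>. if strict_min_at U (\<lambda>k. \<omega> (i, k)) j then \<omega> (i, j) ^ r else 0"
  shows "integrable P g" and "expectation g = V"
proof -
  have jJ: "j \<in> J" using j U_subset by auto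
  have "Measurable.pred P (\<lambda>\<omega>. strict_min_at U (\<lambda>k. \<omega> (i, k)) j)"
    using i U_subset finite_U by (intro pred_strict_min_at_row) auto
  moreover have "(i, j) \<in> I \<times> J" using i jJ by simp
  ultimately have g_meas: "g \<in> borel_measurable P"
    unfolding g_def by measurable
  have AE_01: "AE \<omega> in P. 0 \<le> g \<omega> \<and> g \<omega> \<le> 1"
    using AE_coordinate_01[OF i jJ] by eventually_elim (auto simp: g_def intro: power_le_one)
  then have "AE \<omega> in P. norm (g \<omega>) \<le> 1" by eventually_elim auto
  then show "integrable P g" using g_meas by (rule integrable_const_bound)
  have row: "strict_min_at U (\<lambda>k. \<omega> (i, k)) j \<longleftrightarrow> strict_min_at (Pair i ` U) \<omega> (i, j)" for \<omega>
    by (auto simp: strict_min_at_def)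
  have "card (Pair i ` U - {(i, j)}) = card U - 1"
    using j finite_U by (simp add: card_Diff_singleton card_image inj_on_def)
  with V have "((\<lambda>t. t ^ r * (1 - t) ^ card (Pair i ` U - {(i, j)})) has_integral V) {0..1}"
    by simp
  then have nn: "(\<integral>\<^sup>+\<omega>. ennreal (g \<omega>) \<partial>P) = ennreal V"
    unfolding g_def row
    by (rule nn_integral_strict_min_at[rotated 3]) (use i j U_subset finite_I finite_J in auto)
  have "AE \<omega> in P. 0 \<le> g \<omega>" using AE_01 by eventually_elim simp
  with g_meas have "expectation g = enn2real (\<integral>\<^sup>+\<omega>. ennreal (g \<omega>) \<partial>P)"
    by (rule integral_eq_nn_integral)
  moreover have "0 \<le> V" using V by (rule has_integral_nonneg) auto
  ultimately show "expectation g = V" by (simp add: nn)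
qed

lemma moment_at_strict_min_row:
  fixes c :: "'k \<Rightarrow> real"
  assumes i: "i \<in> I" and V: "((\<lambda>t. t ^ r * (1 - t) ^ (card U - 1)) has_integral V) {0..1}"
  defines "X \<equiv> \<lambda>\<omega>. at_strict_min U (\<lambda>k. \<omega> (i, k)) (\<lambda>j. c j * \<omega> (i, j) ^ r)"
  shows "integrable P X" and "expectation X = (\<Sum>j\<in>U. c j) * V"
proof -
  note g = moment_strict_min_at_row[OF i _ V]
  have X: "X = (\<lambda>\<omega>. \<Sum>j\<in>U. c j * (if strict_min_at U (\<lambda>k. \<omega> (i, k)) j then \<omega> (i, j) ^ r else 0))"
    unfolding X_def at_strict_min_def by (intro ext sum.cong) auto
  show "integrable P X"
    unfolding X by (intro Bochner_Integration.integrable_sum integrable_mult_right g(1))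
  have "expectation X = (\<Sum>j\<in>U. c j * V)"
    unfolding X by (subst Bochner_Integration.integral_sum) (simp_all add: g)
  then show "expectation X = (\<Sum>j\<in>U. c j) * V"
    by (simp add: sum_distrib_right)
qed

lemma expectation_at_strict_min_row:
  assumes "i \<in> I"
  shows "integrable P (\<lambda>\<omega>. at_strict_min U (\<lambda>k. \<omega> (i, k)) c)"
    and "expectation (\<lambda>\<omega>. at_strict_min U (\<lambda>k. \<omega> (i, k)) c) = (\<Sum>j\<in>U. c j) / real (card U)"
proof -
  obtain k where k: "card U = Suc k" using card_U_pos gr0_conv_Suc by blast
  have V: "((\<lambda>t. t ^ 0 * (1 - t) ^ (card U - 1)) has_integral 1 / real (card U)) {0..1}"
    using has_integral_one_minus_power[of k] by (simp add: k add.commute)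
  show "integrable P (\<lambda>\<omega>. at_strict_min U (\<lambda>k. \<omega> (i, k)) c)"
    using moment_at_strict_min_row(1)[OF assms V, of c] by simp
  show "expectation (\<lambda>\<omega>. at_strict_min U (\<lambda>k. \<omega> (i, k)) c) = (\<Sum>j\<in>U. c j) / real (card U)"
    using moment_at_strict_min_row(2)[OF assms V, of c] by simp
qed

lemma moments_row_minimum:
  assumes i: "i \<in> I"
  defines "Y \<equiv> \<lambda>\<omega>. at_strict_min U (\<lambda>k. \<omega> (i, k)) (\<lambda>k. \<omega> (i, k))"
  shows "integrable P Y" and "expectation Y = 1 / (real (card U) + 1)"
    and "integrable P (\<lambda>\<omega>. (Y \<omega>)\<^sup>2)"
    and "expectation (\<lambda>\<omega>. (Y \<omega>)\<^sup>2) = 2 / ((real (card U) + 1) * (real (card U) + 2))"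
proof -
  obtain k where k: "card U = Suc k" using card_U_pos gr0_conv_Suc by blast
  then have k_eq: "card U - 1 = k" "real k + 1 = real (card U)" "real k + 2 = real (card U) + 1" "real k + 3 = real (card U) + 2"
    by simp_all
  have V1: "((\<lambda>t. t ^ 1 * (1 - t) ^ (card U - 1)) has_integral 1 / (real (card U) * (real (card U) + 1))) {0..1}"
    using has_integral_t_one_minus_power[of k] unfolding k_eq power_one_right .
  have V2: "((\<lambda>t. t ^ 2 * (1 - t) ^ (card U - 1)) has_integral
      2 / (real (card U) * (real (card U) + 1) * (real (card U) + 2))) {0..1}"
    using has_integral_t_sq_one_minus_power[of k] unfolding k_eq .
  have Y1: "Y = (\<lambda>\<omega>. at_strict_min U (\<lambda>k. \<omega> (i, k)) (\<lambda>j. 1 * \<omega> (i, j) ^ 1))"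
    unfolding Y_def by simp
  have Y2: "(\<lambda>\<omega>. (Y \<omega>)\<^sup>2) = (\<lambda>\<omega>. at_strict_min U (\<lambda>k. \<omega> (i, k)) (\<lambda>j. 1 * \<omega> (i, j) ^ 2))"
    unfolding Y_def using finite_U by (simp add: at_strict_min_square)
  show "integrable P Y"
    unfolding Y1 by (rule moment_at_strict_min_row(1)[OF i V1])
  show "integrable P (\<lambda>\<omega>. (Y \<omega>)\<^sup>2)"
    unfolding Y2 by (rule moment_at_strict_min_row(1)[OF i V2])
  show "expectation Y = 1 / (real (card U) + 1)"
    unfolding Y1 moment_at_strict_min_row(2)[OF i V1] using card_U_pos by simp
  show "expectation (\<lambda>\<omega>. (Y \<omega>)\<^sup>2) = 2 / ((real (card U) + 1) * (real (card U) + 2))"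
    unfolding Y2 moment_at_strict_min_row(2)[OF i V2] using card_U_pos by simp
qed

lemma AE_ex_strict_min_at_row:
  assumes i: "i \<in> I"
  shows "AE \<omega> in P. \<exists>j. strict_min_at U (\<lambda>k. \<omega> (i, k)) j"
proof -
  (* the events "j is the strict minimiser" are disjoint, each of probability 1 / card U *)
  define S where "S \<omega> = at_strict_min U (\<lambda>k. \<omega> (i, k)) (\<lambda>_. 1)" for \<omega>
  have S_int: "integrable P S" and "expectation S = 1"
    using expectation_at_strict_min_row[OF i, of "\<lambda>_. 1"] card_U_pos by (simp_all add: S_def[abs_def])
  then have "expectation (\<lambda>\<omega>. 1 - S \<omega>) = 0"
    by (simp add: prob_space)
  moreover have S_cases: "S \<omega> = (if \<exists>j. strict_min_at U (\<lambda>k. \<omega> (i, k)) j then 1 else 0)" for \<omega>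
    unfolding S_def using finite_U by (auto simp: at_strict_min_eq at_strict_min_eq_0)
  then have "AE \<omega> in P. 0 \<le> 1 - S \<omega>"
    by simp
  moreover have "integrable P (\<lambda>\<omega>. 1 - S \<omega>)"
    using S_int by simp
  ultimately have "AE \<omega> in P. 1 - S \<omega> = 0"
    using integral_nonneg_eq_0_iff_AE by blast
  then show ?thesis
    by eventually_elim (auto simp: S_cases split: if_splits)
qed

lemma indep_vars_coordinates: "indep_vars (\<lambda>_. uniform01) (\<lambda>p \<omega>. \<omega> p) (I \<times> J)"
proof (cases "I \<times> J = {}")
  case True
  then show ?thesis by (auto simp: indep_vars_def indep_sets_def)
next
  case False
  interpret PP: product_prob_space "\<lambda>_. uniform01" "I \<times> J"
    by (simp add: product_prob_space_def product_prob_space_axioms_def product_sigma_finite_def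
        prob_space_uniform01 prob_space_imp_sigma_finite)
  have "distr P P (\<lambda>\<omega>. \<lambda>p\<in>I \<times> J. \<omega> p) = distr P P (\<lambda>\<omega>. \<omega>)"
    by (rule distr_cong) (auto simp: space_PiM)
  also have "\<dots> = PiM (I \<times> J) (\<lambda>p. distr P uniform01 (\<lambda>\<omega>. \<omega> p))"
    by (auto simp: PP.PiM_component intro!: PiM_cong)
  finally show ?thesis
    by (subst indep_vars_iff_distr_eq_PiM'[OF False]) (auto intro: measurable_component_singleton)
qed

lemma indep_vars_rows:
  assumes F: "\<And>i. i \<in> I \<Longrightarrow> F i \<in> borel_measurable (PiM ({i} \<times> J) (\<lambda>_. uniform01))"
    and F_local: "\<And>i \<omega>. i \<in> I \<Longrightarrow> F i (restrict \<omega> ({i} \<times> J)) = F i \<omega>"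
  shows "indep_vars (\<lambda>_. borel) F I"
proof -
  have "indep_vars (\<lambda>i. PiM ({i} \<times> J) (\<lambda>_. uniform01)) (\<lambda>i \<omega>. restrict (\<lambda>p. \<omega> p) ({i} \<times> J)) I"
    by (rule indep_vars_restrict[OF indep_vars_coordinates]) (auto simp: disjoint_family_on_def)
  then have "indep_vars (\<lambda>_. borel) (\<lambda>i \<omega>. F i (restrict (\<lambda>p. \<omega> p) ({i} \<times> J))) I"
    by (rule indep_vars_compose2) (rule F)
  then show ?thesis
    by (subst (asm) indep_vars_cong[OF refl _ refl, where Y = F]) (auto simp: F_local fun_eq_iff)
qed

lemma indep_vars_at_strict_min_rows:
  "indep_vars (\<lambda>_. borel) (\<lambda>i \<omega>. at_strict_min U (\<lambda>k. \<omega> (i, k)) (\<lambda>j. c j * \<omega> (i, j) ^ r)) I"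
proof (rule indep_vars_rows)
  fix i assume "i \<in> I"
  have [measurable]: "Measurable.pred (PiM ({i} \<times> J) (\<lambda>_. uniform01)) (\<lambda>\<omega>. strict_min_at U (\<lambda>k. \<omega> (i, k)) j)"
    for j using finite_U U_subset by (intro pred_strict_min_at_row) auto
  have [measurable]: "(\<lambda>\<omega>. \<omega> (i, j)) \<in> borel_measurable (PiM ({i} \<times> J) (\<lambda>_. uniform01))" if "j \<in> U" for j
    using that U_subset by (intro measurable_component_uniform01) auto
  show "(\<lambda>\<omega>. at_strict_min U (\<lambda>k. \<omega> (i, k)) (\<lambda>j. c j * \<omega> (i, j) ^ r))
      \<in> borel_measurable (PiM ({i} \<times> J) (\<lambda>_. uniform01))"
    unfolding at_strict_min_def using finite_U by measurable
  show "at_strict_min U (\<lambda>k. restrict \<omega> ({i} \<times> J) (i, k)) (\<lambda>j. c j * restrict \<omega> ({i} \<times> J) (i, j) ^ r)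
      = at_strict_min U (\<lambda>k. \<omega> (i, k)) (\<lambda>j. c j * \<omega> (i, j) ^ r)" for \<omega>
    using U_subset by (intro at_strict_min_cong) auto
qed

end

section \<open>Chebyshev's inequality for sample means\<close>

lemma (in prob_space) expectation_centered_product:
  fixes Z :: "'i \<Rightarrow> 'a \<Rightarrow> real" and \<mu> s :: real
  assumes ind: "indep_vars (\<lambda>_. borel) Z I" and ik: "i \<in> I" "k \<in> I"
    and int1: "\<And>i. i \<in> I \<Longrightarrow> integrable M (Z i)"
    and int2: "\<And>i. i \<in> I \<Longrightarrow> integrable M (\<lambda>\<omega>. (Z i \<omega>)\<^sup>2)"
    and E1: "\<And>i. i \<in> I \<Longrightarrow> expectation (Z i) = \<mu>"
    and E2: "\<And>i. i \<in> I \<Longrightarrow> expectation (\<lambda>\<omega>. (Z i \<omega>)\<^sup>2) = s"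
  shows "integrable M (\<lambda>\<omega>. (Z i \<omega> - \<mu>) * (Z k \<omega> - \<mu>))"
    and "expectation (\<lambda>\<omega>. (Z i \<omega> - \<mu>) * (Z k \<omega> - \<mu>)) = (if i = k then s - \<mu>\<^sup>2 else 0)"
proof -
  have "integrable M (\<lambda>\<omega>. (Z i \<omega> - \<mu>) * (Z k \<omega> - \<mu>)) \<and>
    expectation (\<lambda>\<omega>. (Z i \<omega> - \<mu>) * (Z k \<omega> - \<mu>)) = (if i = k then s - \<mu>\<^sup>2 else 0)"
  proof (cases "i = k")
    case True
    have "(\<lambda>\<omega>. (Z i \<omega> - \<mu>) * (Z k \<omega> - \<mu>)) = (\<lambda>\<omega>. (Z i \<omega>)\<^sup>2 - 2 * \<mu> * Z i \<omega> + \<mu>\<^sup>2)"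
      using True by (auto simp: power2_eq_square algebra_simps)
    then show ?thesis
      using True int1[OF ik(1)] int2[OF ik(1)] E1[OF ik(1)] E2[OF ik(1)]
      by (simp add: prob_space power2_eq_square)
  next
    case False
    have "indep_vars (\<lambda>_. borel) Z {i, k}"
      by (rule indep_vars_subset[OF ind]) (use ik in auto)
    then have "indep_vars (\<lambda>_. borel) (\<lambda>l \<omega>. Z l \<omega> - \<mu>) {i, k}"
      by (rule indep_vars_compose2[where Y = "\<lambda>_ x. x - \<mu>"]) measurable
    moreover have "\<And>l. l \<in> {i, k} \<Longrightarrow> integrable M (\<lambda>\<omega>. Z l \<omega> - \<mu>)"
      using ik int1 by auto
    ultimately have "integrable M (\<lambda>\<omega>. \<Prod>l\<in>{i, k}. Z l \<omega> - \<mu>)"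
      and "expectation (\<lambda>\<omega>. \<Prod>l\<in>{i, k}. Z l \<omega> - \<mu>) = (\<Prod>l\<in>{i, k}. expectation (\<lambda>\<omega>. Z l \<omega> - \<mu>))"
      by (auto intro: indep_vars_integrable indep_vars_lebesgue_integral)
    moreover have "expectation (\<lambda>\<omega>. Z l \<omega> - \<mu>) = 0" if "l \<in> I" for l
      using int1[OF that] E1[OF that] by (simp add: prob_space)
    ultimately show ?thesis
      using False ik by simp
  qed
  then show "integrable M (\<lambda>\<omega>. (Z i \<omega> - \<mu>) * (Z k \<omega> - \<mu>))"
    and "expectation (\<lambda>\<omega>. (Z i \<omega> - \<mu>) * (Z k \<omega> - \<mu>)) = (if i = k then s - \<mu>\<^sup>2 else 0)"
    by auto
qed

lemma (in prob_space) expectation_centered_sum_square: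
  fixes Z :: "'i \<Rightarrow> 'a \<Rightarrow> real" and \<mu> s :: real
  assumes I: "finite I" and ind: "indep_vars (\<lambda>_. borel) Z I"
    and int1: "\<And>i. i \<in> I \<Longrightarrow> integrable M (Z i)"
    and int2: "\<And>i. i \<in> I \<Longrightarrow> integrable M (\<lambda>\<omega>. (Z i \<omega>)\<^sup>2)"
    and E1: "\<And>i. i \<in> I \<Longrightarrow> expectation (Z i) = \<mu>"
    and E2: "\<And>i. i \<in> I \<Longrightarrow> expectation (\<lambda>\<omega>. (Z i \<omega>)\<^sup>2) = s"
  shows "integrable M (\<lambda>\<omega>. (\<Sum>i\<in>I. Z i \<omega> - \<mu>)\<^sup>2)"
    and "expectation (\<lambda>\<omega>. (\<Sum>i\<in>I. Z i \<omega> - \<mu>)\<^sup>2) = card I * (s - \<mu>\<^sup>2)"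
proof -
  note cov = expectation_centered_product[OF ind _ _ int1 int2 E1 E2]
  have sq: "(\<Sum>i\<in>I. Z i \<omega> - \<mu>)\<^sup>2 = (\<Sum>i\<in>I. \<Sum>k\<in>I. (Z i \<omega> - \<mu>) * (Z k \<omega> - \<mu>))" for \<omega>
    by (simp add: power2_eq_square sum_product)
  show "integrable M (\<lambda>\<omega>. (\<Sum>i\<in>I. Z i \<omega> - \<mu>)\<^sup>2)"
    unfolding sq using cov by (intro Bochner_Integration.integrable_sum) auto
  have "expectation (\<lambda>\<omega>. (\<Sum>i\<in>I. Z i \<omega> - \<mu>)\<^sup>2)
      = (\<Sum>i\<in>I. \<Sum>k\<in>I. expectation (\<lambda>\<omega>. (Z i \<omega> - \<mu>) * (Z k \<omega> - \<mu>)))"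
    unfolding sq using cov by (simp add: Bochner_Integration.integral_sum Bochner_Integration.integrable_sum)
  also have "\<dots> = (\<Sum>i\<in>I. \<Sum>k\<in>I. if i = k then s - \<mu>\<^sup>2 else 0)"
    by (intro sum.cong refl) (simp add: cov)
  also have "\<dots> = card I * (s - \<mu>\<^sup>2)"
    using I by simp
  finally show "expectation (\<lambda>\<omega>. (\<Sum>i\<in>I. Z i \<omega> - \<mu>)\<^sup>2) = card I * (s - \<mu>\<^sup>2)" .
qed

lemma (in prob_space) prob_sample_mean_deviation:
  fixes Z :: "'i \<Rightarrow> 'a \<Rightarrow> real" and \<mu> s t :: real
  assumes I: "finite I" "I \<noteq> {}" and ind: "indep_vars (\<lambda>_. borel) Z I"
    and int1: "\<And>i. i \<in> I \<Longrightarrow> integrable M (Z i)"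
    and int2: "\<And>i. i \<in> I \<Longrightarrow> integrable M (\<lambda>\<omega>. (Z i \<omega>)\<^sup>2)"
    and E1: "\<And>i. i \<in> I \<Longrightarrow> expectation (Z i) = \<mu>"
    and E2: "\<And>i. i \<in> I \<Longrightarrow> expectation (\<lambda>\<omega>. (Z i \<omega>)\<^sup>2) = s"
    and t: "t > 0"
  shows "prob {\<omega>\<in>space M. t \<le> \<bar>(\<Sum>i\<in>I. Z i \<omega>) / card I - \<mu>\<bar>} \<le> (s - \<mu>\<^sup>2) / (card I * t\<^sup>2)"
proof -
  have n: "real (card I) > 0" using I by (simp add: card_gt_0_iff)
  have S: "integrable M (\<lambda>\<omega>. (\<Sum>i\<in>I. Z i \<omega> - \<mu>)\<^sup>2)"
      "expectation (\<lambda>\<omega>. (\<Sum>i\<in>I. Z i \<omega> - \<mu>)\<^sup>2) = card I * (s - \<mu>\<^sup>2)"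
    by (rule expectation_centered_sum_square[OF I(1) ind]; simp add: int1 int2 E1 E2)+
  have mean: "(\<Sum>i\<in>I. Z i \<omega>) / card I - \<mu> = (\<Sum>i\<in>I. Z i \<omega> - \<mu>) / card I" for \<omega>
    using n by (simp add: sum_subtractf field_simps)
  have [measurable]: "Z i \<in> borel_measurable M" if "i \<in> I" for i
    using int1[OF that] by simp
  have "prob {\<omega>\<in>space M. t \<le> \<bar>(\<Sum>i\<in>I. Z i \<omega> - \<mu>) / card I\<bar>}
      \<le> expectation (\<lambda>\<omega>. ((\<Sum>i\<in>I. Z i \<omega> - \<mu>) / card I)\<^sup>2) / t\<^sup>2"
    using S(1) t I(1) by (intro second_moment_method) (auto simp: power_divide)
  also have "\<dots> = (s - \<mu>\<^sup>2) / (card I * t\<^sup>2)"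
    using S(2) n by (simp add: power_divide power2_eq_square)
  finally show ?thesis unfolding mean .
qed

section \<open>Discretized vectors\<close>

lemma sum_lessThan_mult_blocks:
  fixes n L :: nat
  shows "(\<Sum>j<n * L. f j) = (\<Sum>i<n. \<Sum>k<L. f (i * L + k))"
proof -
  have "(\<Sum>k\<in>{i * L..<i * L + L}. f k) = (\<Sum>k<L. f (i * L + k))" for i
    using sum.shift_bounds_nat_ivl[of f 0 "i * L" L] by (simp add: lessThan_atLeast0 add.commute)
  then show ?thesis
    using sum.nat_group[of f L n] by simp
qed

lemma sum_lessThan_prefix_const:
  "m \<le> L \<Longrightarrow> (\<Sum>k<L. if k < m then x else 0) = real m * (x :: real)"
proof -
  assume "m \<le> L"
  then have "{..<L} \<inter> {..<m} = {..<m}" by auto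
  then show ?thesis by (simp add: sum.If_cases flip: lessThan_def)
qed

lemma block_index_less:
  fixes i k n L :: nat
  assumes "i < n" "k < L"
  shows "i * L + k < n * L"
proof -
  have "i * L + k < Suc i * L" using assms(2) by simp
  also have "\<dots> \<le> n * L" using assms(1) by (intro mult_le_mono1) simp
  finally show ?thesis .
qed

lemma block_div_mod:
  fixes j n L :: nat
  assumes "j < n * L"
  shows "j div L < n" and "j mod L < L" and "j = j div L * L + j mod L"
proof -
  have "L > 0" using assms by (cases L) auto
  then show "j div L < n" "j mod L < L" "j = j div L * L + j mod L"
    using assms by (simp_all add: div_less_iff_less_mult)
qed

locale discretized_vector =
  fixes n L :: nat and a :: "nat \<Rightarrow> real"
  assumes L_pos: "L > 0" and nonzero: "\<exists>i<n. a i \<noteq> 0"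
    and discretized: "\<forall>i<n. \<exists>k::nat. (a i)\<^sup>2 / (vnorm n a)\<^sup>2 = real k / real L"
begin

definition \<alpha> :: "nat \<Rightarrow> real" where
  "\<alpha> i = a i / vnorm n a"

definition copies :: "nat \<Rightarrow> nat" where
  "copies i = nat \<lfloor>(\<alpha> i)\<^sup>2 * real L\<rfloor>"

lemma sum_squares_pos: "(\<Sum>i<n. (a i)\<^sup>2) > 0"
proof -
  obtain i where i: "i < n" "a i \<noteq> 0" using nonzero by auto
  then have "0 < (a i)\<^sup>2" by simp
  also have "(a i)\<^sup>2 \<le> (\<Sum>i<n. (a i)\<^sup>2)" using i by (intro member_le_sum) auto
  finally show ?thesis .
qed

lemma vnorm_pos: "vnorm n a > 0"
  unfolding vnorm_def using sum_squares_pos by simp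

lemma \<alpha>_eq_0_iff: "\<alpha> i = 0 \<longleftrightarrow> a i = 0"
  using vnorm_pos by (simp add: \<alpha>_def)

lemma \<alpha>_square: "(\<alpha> i)\<^sup>2 = (a i)\<^sup>2 / (vnorm n a)\<^sup>2"
  by (simp add: \<alpha>_def power_divide)

lemma sum_\<alpha>_square: "(\<Sum>i<n. (\<alpha> i)\<^sup>2) = 1"
  using sum_squares_pos
  by (simp add: \<alpha>_square vnorm_def sum_divide_distrib[symmetric])

lemma restr_norm_eq: "restr_norm I a = vnorm n a * sqrt (\<Sum>i\<in>I. (\<alpha> i)\<^sup>2)"
proof -
  have "(\<Sum>i\<in>I. (a i)\<^sup>2) = (vnorm n a)\<^sup>2 * (\<Sum>i\<in>I. (\<alpha> i)\<^sup>2)"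
    using vnorm_pos by (simp add: \<alpha>_square sum_distrib_left)
  then show ?thesis
    using vnorm_pos by (simp add: restr_norm_def real_sqrt_mult)
qed

lemma \<alpha>_square_le_1: "i < n \<Longrightarrow> (\<alpha> i)\<^sup>2 \<le> 1"
  using member_le_sum[of i "{..<n}" "\<lambda>i. (\<alpha> i)\<^sup>2"] sum_\<alpha>_square by simp

lemma copies_eq: "i < n \<Longrightarrow> real (copies i) = (\<alpha> i)\<^sup>2 * real L"
proof -
  assume "i < n"
  then obtain k :: nat where "(a i)\<^sup>2 / (vnorm n a)\<^sup>2 = real k / real L" using discretized by auto
  then have "(\<alpha> i)\<^sup>2 * real L = real k" using L_pos by (simp add: \<alpha>_square)
  then show ?thesis unfolding copies_def by simp
qed

lemma copies_le: "i < n \<Longrightarrow> copies i \<le> L"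
proof -
  assume i: "i < n"
  have "real (copies i) \<le> real L"
    using copies_eq[OF i] \<alpha>_square_le_1[OF i] L_pos by (simp add: mult_le_cancel_right1)
  then show ?thesis by simp
qed

lemma copies_pos_iff: "i < n \<Longrightarrow> 0 < copies i \<longleftrightarrow> a i \<noteq> 0"
proof -
  assume i: "i < n"
  have "0 < real (copies i) \<longleftrightarrow> \<alpha> i \<noteq> 0"
    using copies_eq[OF i] L_pos by (simp add: zero_less_mult_iff)
  then show ?thesis by (simp add: \<alpha>_eq_0_iff)
qed

lemma round_vec_\<alpha>: "i < n \<Longrightarrow> round_vec n L \<alpha> i = \<alpha> i"
proof -
  assume i: "i < n"
  define zt where "zt = (\<lambda>i. sgn (\<alpha> i) * sqrt (real_of_int \<lfloor>(\<alpha> i)\<^sup>2 * real L\<rfloor> / real L))"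
  have zt: "zt i = \<alpha> i" if "i < n" for i
  proof -
    have floor_eq: "real_of_int \<lfloor>(\<alpha> i)\<^sup>2 * real L\<rfloor> = (\<alpha> i)\<^sup>2 * real L"
      by (simp only: copies_eq[OF that, symmetric] floor_of_nat of_int_of_nat_eq)
    have "real_of_int \<lfloor>(\<alpha> i)\<^sup>2 * real L\<rfloor> / real L = (\<alpha> i)\<^sup>2"
      unfolding floor_eq using L_pos by simp
    then show ?thesis unfolding zt_def by (simp add: sgn_mult_abs)
  qed
  have "1 - (\<Sum>i<n. (zt i)\<^sup>2) = 0" using zt sum_\<alpha>_square by simp
  then show ?thesis
    unfolding round_vec_def Let_def zt_def[symmetric] using zt[OF i] by (auto simp: sgn_mult_abs)
qed

lemma abar_block:
  assumes "i < n" "k < L"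
  shows "abar n L a (i * L + k) = (if k < copies i then \<alpha> i else 0)"
proof -
  have "(\<lambda>i. a i / vnorm n a) = \<alpha>" by (simp add: \<alpha>_def fun_eq_iff)
  then show ?thesis
    using assms round_vec_\<alpha>[OF assms(1)] copies_eq[OF assms(1)]
    by (simp add: abar_def expand_vec_def flip: of_nat_less_iff)
qed

lemma mem_abar_supp_block:
  assumes "i < n" "k < L"
  shows "i * L + k \<in> abar_supp n L a \<longleftrightarrow> k < copies i"
proof -
  have "i * L + k < n * L"
    using assms by (rule block_index_less)
  then show ?thesis
    using assms abar_block[OF assms] copies_pos_iff[OF assms(1)] \<alpha>_eq_0_iff[of i]
    by (auto simp: abar_supp_def)
qed

lemma abar_supp_subset: "abar_supp n L a \<subseteq> {..<n * L}"
  by (auto simp: abar_supp_def)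

lemma finite_abar_supp: "finite (abar_supp n L a)"
  using abar_supp_subset finite_subset by blast

lemma abar_supp_nonempty: "abar_supp n L a \<noteq> {}"
proof -
  obtain i where i: "i < n" "a i \<noteq> 0" using nonzero by auto
  then have "i * L + 0 \<in> abar_supp n L a"
    using L_pos copies_pos_iff[OF i(1)] by (subst mem_abar_supp_block) auto
  then show ?thesis by auto
qed

lemma wmh_strict_min_at:
  assumes "abar_supp n L a \<subseteq> V" and j: "strict_min_at V (\<lambda>k. h (i, k)) j"
  shows "j \<in> abar_supp n L a \<Longrightarrow> wmh_hash n L a h i = h (i, j)"
    and "j \<notin> abar_supp n L a \<Longrightarrow> h (i, j) < wmh_hash n L a h i"
    and "j \<in> abar_supp n L a \<Longrightarrow> wmh_val n L a h i = abar n L a j"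
  using Min_image_strict_min_at[OF finite_abar_supp assms(1) _ j]
    Min_image_gt_strict_min_at[OF finite_abar_supp assms(1) abar_supp_nonempty _ j]
    arg_min_strict_min_at[OF assms(1) _ j]
  by (simp_all add: wmh_hash_def wmh_val_def)

end

locale discretized_pair = A: discretized_vector n L a + B: discretized_vector n L b
  for n L :: nat and a b :: "nat \<Rightarrow> real"
begin

abbreviation \<alpha> where "\<alpha> \<equiv> A.\<alpha>"
abbreviation \<beta> where "\<beta> \<equiv> B.\<alpha>"

definition U :: "nat set" where
  "U = abar_supp n L a \<union> abar_supp n L b"

text \<open>The summand of the estimator for a sample whose minimum hash over \<open>U\<close> sits at index \<open>j\<close>.\<close>
definition ratio :: "nat \<Rightarrow> real" where
  "ratio j = (if j \<in> abar_supp n L a \<inter> abar_supp n L b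
    then abar n L a j * abar n L b j / min ((abar n L a j)\<^sup>2) ((abar n L b j)\<^sup>2) else 0)"

definition common :: "nat set" where
  "common = {i. i < n \<and> a i \<noteq> 0 \<and> b i \<noteq> 0}"

abbreviation cos_sim :: real where
  "cos_sim \<equiv> \<Sum>i<n. \<alpha> i * \<beta> i"

text \<open>\<open>D = max (\<parallel>a\<^sub>I\<parallel> / \<parallel>a\<parallel>) (\<parallel>b\<^sub>I\<parallel> / \<parallel>b\<parallel>)\<close> with \<open>I = common\<close>, the scale of the error bound.\<close>
definition D :: real where
  "D = max (sqrt (\<Sum>i\<in>common. (\<alpha> i)\<^sup>2)) (sqrt (\<Sum>i\<in>common. (\<beta> i)\<^sup>2))"

lemma U_subset: "U \<subseteq> {..<n * L}"
  unfolding U_def using A.abar_supp_subset B.abar_supp_subset by blast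

lemma finite_U: "finite U"
  using U_subset finite_subset by blast

lemma U_nonempty: "U \<noteq> {}"
  unfolding U_def using A.abar_supp_nonempty by blast

lemma real_min_copies: "i < n \<Longrightarrow> real (min (A.copies i) (B.copies i)) = real L * min ((\<alpha> i)\<^sup>2) ((\<beta> i)\<^sup>2)"
  by (simp add: A.copies_eq B.copies_eq min_mult_distrib_left mult.commute of_nat_min)

lemma real_max_copies: "i < n \<Longrightarrow> real (max (A.copies i) (B.copies i)) = real L * max ((\<alpha> i)\<^sup>2) ((\<beta> i)\<^sup>2)"
  by (simp add: A.copies_eq B.copies_eq max_mult_distrib_left mult.commute of_nat_max)

lemma mem_U_block:
  "i < n \<Longrightarrow> k < L \<Longrightarrow> i * L + k \<in> U \<longleftrightarrow> k < max (A.copies i) (B.copies i)"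
  by (auto simp: U_def A.mem_abar_supp_block B.mem_abar_supp_block)

lemma ratio_block:
  assumes "i < n" "k < L"
  shows "ratio (i * L + k)
    = (if k < min (A.copies i) (B.copies i) then \<alpha> i * \<beta> i / min ((\<alpha> i)\<^sup>2) ((\<beta> i)\<^sup>2) else 0)"
  using assms by (simp add: ratio_def A.mem_abar_supp_block B.mem_abar_supp_block A.abar_block B.abar_block)

lemma sum_U_ratio:
  assumes "g 0 = 0"
  shows "(\<Sum>j\<in>U. g (ratio j))
    = (\<Sum>i<n. real (min (A.copies i) (B.copies i)) * g (\<alpha> i * \<beta> i / min ((\<alpha> i)\<^sup>2) ((\<beta> i)\<^sup>2)))"
proof -
  have "(\<Sum>j\<in>U. g (ratio j)) = (\<Sum>j<n * L. g (ratio j))"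
    using U_subset assms by (intro sum.mono_neutral_left) (auto simp: ratio_def U_def)
  also have "\<dots> = (\<Sum>i<n. \<Sum>k<L. g (ratio (i * L + k)))"
    by (rule sum_lessThan_mult_blocks)
  also have "\<dots> = (\<Sum>i<n. real (min (A.copies i) (B.copies i)) * g (\<alpha> i * \<beta> i / min ((\<alpha> i)\<^sup>2) ((\<beta> i)\<^sup>2)))"
  proof (intro sum.cong refl)
    fix i assume "i \<in> {..<n}"
    then have i: "i < n" by simp
    have "(\<Sum>k<L. g (ratio (i * L + k)))
        = (\<Sum>k<L. if k < min (A.copies i) (B.copies i) then g (\<alpha> i * \<beta> i / min ((\<alpha> i)\<^sup>2) ((\<beta> i)\<^sup>2)) else 0)"
      using i assms by (intro sum.cong) (auto simp: ratio_block)
    also have "\<dots> = real (min (A.copies i) (B.copies i)) * g (\<alpha> i * \<beta> i / min ((\<alpha> i)\<^sup>2) ((\<beta> i)\<^sup>2))"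
      using i A.copies_le by (intro sum_lessThan_prefix_const) (simp add: min.coboundedI1)
    finally show "(\<Sum>k<L. g (ratio (i * L + k))) = \<dots>" .
  qed
  finally show ?thesis .
qed

lemma card_U: "real (card U) = real L * (\<Sum>i<n. max ((\<alpha> i)\<^sup>2) ((\<beta> i)\<^sup>2))"
proof -
  have "real (card U) = (\<Sum>j<n * L. if j \<in> U then 1 else 0)"
    using U_subset by (simp add: sum.If_cases Int_absorb1)
  also have "\<dots> = (\<Sum>i<n. \<Sum>k<L. if i * L + k \<in> U then 1 else 0)"
    by (rule sum_lessThan_mult_blocks)
  also have "\<dots> = (\<Sum>i<n. real (max (A.copies i) (B.copies i)))"
  proof (intro sum.cong refl)
    fix i assume "i \<in> {..<n}"
    then have i: "i < n" by simp
    have "(\<Sum>k<L. if i * L + k \<in> U then 1 else 0) = (\<Sum>k<L. if k < max (A.copies i) (B.copies i) then 1 else 0)"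
      using i by (intro sum.cong) (auto simp: mem_U_block)
    also have "\<dots> = real (max (A.copies i) (B.copies i))"
      using i A.copies_le B.copies_le by (subst sum_lessThan_prefix_const) auto
    finally show "(\<Sum>k<L. if i * L + k \<in> U then 1 else 0) = real (max (A.copies i) (B.copies i))" .
  qed
  finally show ?thesis
    by (simp add: real_max_copies sum_distrib_left)
qed

lemma card_U_bounds: "real L \<le> real (card U)" "real (card U) \<le> 2 * real L"
proof -
  have "1 \<le> (\<Sum>i<n. max ((\<alpha> i)\<^sup>2) ((\<beta> i)\<^sup>2))"
    using sum_mono[of "{..<n}" "\<lambda>i. (\<alpha> i)\<^sup>2" "\<lambda>i. max ((\<alpha> i)\<^sup>2) ((\<beta> i)\<^sup>2)"] A.sum_\<alpha>_square
    by simp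
  then show "real L \<le> real (card U)"
    unfolding card_U using mult_left_mono[of 1 _ "real L"] by simp
  have "(\<Sum>i<n. max ((\<alpha> i)\<^sup>2) ((\<beta> i)\<^sup>2)) \<le> (\<Sum>i<n. (\<alpha> i)\<^sup>2 + (\<beta> i)\<^sup>2)"
    by (intro sum_mono) auto
  then have le_2: "(\<Sum>i<n. max ((\<alpha> i)\<^sup>2) ((\<beta> i)\<^sup>2)) \<le> 2"
    using A.sum_\<alpha>_square B.sum_\<alpha>_square by (simp add: sum.distrib)
  show "real (card U) \<le> 2 * real L"
    unfolding card_U using mult_left_mono[OF le_2, of "real L"] by (simp add: mult.commute)
qed

lemma mem_common_iff: "i \<in> common \<longleftrightarrow> i < n \<and> \<alpha> i \<noteq> 0 \<and> \<beta> i \<noteq> 0"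
  by (auto simp: common_def A.\<alpha>_eq_0_iff B.\<alpha>_eq_0_iff)

lemma sum_common: "(\<Sum>i\<in>common. f i) = (\<Sum>i<n. if \<alpha> i \<noteq> 0 \<and> \<beta> i \<noteq> 0 then f i else 0)"
proof -
  have "common = {..<n} \<inter> {i. \<alpha> i \<noteq> 0 \<and> \<beta> i \<noteq> 0}" by (auto simp: mem_common_iff)
  then show ?thesis by (simp add: sum.If_cases)
qed

lemma sum_ratio: "(\<Sum>j\<in>U. ratio j) = real L * cos_sim"
proof -
  have "real (min (A.copies i) (B.copies i)) * (\<alpha> i * \<beta> i / min ((\<alpha> i)\<^sup>2) ((\<beta> i)\<^sup>2))
      = real L * (\<alpha> i * \<beta> i)" if "i < n" for i
  proof (cases "\<alpha> i = 0 \<or> \<beta> i = 0")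
    case False
    then have "min ((\<alpha> i)\<^sup>2) ((\<beta> i)\<^sup>2) \<noteq> 0" by (simp add: min_def)
    then show ?thesis using that by (simp add: real_min_copies)
  qed (auto simp: real_min_copies)
  then show ?thesis
    using sum_U_ratio[of "\<lambda>x. x"] by (simp add: sum_distrib_left)
qed

lemma sum_ratio_square: "(\<Sum>j\<in>U. (ratio j)\<^sup>2) = real L * (\<Sum>i\<in>common. max ((\<alpha> i)\<^sup>2) ((\<beta> i)\<^sup>2))"
proof -
  have "real (min (A.copies i) (B.copies i)) * (\<alpha> i * \<beta> i / min ((\<alpha> i)\<^sup>2) ((\<beta> i)\<^sup>2))\<^sup>2
      = real L * (if \<alpha> i \<noteq> 0 \<and> \<beta> i \<noteq> 0 then max ((\<alpha> i)\<^sup>2) ((\<beta> i)\<^sup>2) else 0)" if "i < n" for i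
  proof (cases "\<alpha> i = 0 \<or> \<beta> i = 0")
    case False
    define x y where "x = (\<alpha> i)\<^sup>2" and "y = (\<beta> i)\<^sup>2"
    have xy: "x > 0" "y > 0" using False by (auto simp: x_def y_def)
    have sq: "(\<alpha> i * \<beta> i / min x y)\<^sup>2 = x * y / (min x y)\<^sup>2"
      by (simp add: x_def y_def power_divide power_mult_distrib)
    have max: "min x y * (x * y / (min x y)\<^sup>2) = max x y"
      using xy by (cases "x \<le> y") (auto simp: power2_eq_square min_def max_def)
    have "real (min (A.copies i) (B.copies i)) * (\<alpha> i * \<beta> i / min ((\<alpha> i)\<^sup>2) ((\<beta> i)\<^sup>2))\<^sup>2
        = real L * (min x y * (x * y / (min x y)\<^sup>2))"
      unfolding real_min_copies[OF that] x_def[symmetric] y_def[symmetric] sq by (simp only: mult.assoc)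
    also have "\<dots> = real L * max x y"
      unfolding max ..
    finally show ?thesis
      using False by (simp add: x_def y_def)
  qed (auto simp: real_min_copies)
  then show ?thesis
    using sum_U_ratio[of "\<lambda>x. x\<^sup>2"] by (simp add: sum_common sum_distrib_left)
qed

lemma vinner_eq: "vinner n a b = vnorm n a * vnorm n b * cos_sim"
  unfolding vinner_def A.\<alpha>_def B.\<alpha>_def sum_distrib_left
  using A.vnorm_pos B.vnorm_pos by (intro sum.cong) auto

lemma sum_common_square_le:
  shows "(\<Sum>i\<in>common. (\<alpha> i)\<^sup>2) \<le> D\<^sup>2" and "(\<Sum>i\<in>common. (\<beta> i)\<^sup>2) \<le> D\<^sup>2"
proof -
  have "x \<le> D\<^sup>2" if "0 \<le> x" "sqrt x \<le> D" for x
    using power_mono[OF that(2), of 2] that(1) by simp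
  then show "(\<Sum>i\<in>common. (\<alpha> i)\<^sup>2) \<le> D\<^sup>2" "(\<Sum>i\<in>common. (\<beta> i)\<^sup>2) \<le> D\<^sup>2"
    by (simp_all add: D_def sum_nonneg)
qed

lemma D_nonneg: "0 \<le> D"
  by (simp add: D_def le_max_iff_disj sum_nonneg)

lemma D_le_1: "D \<le> 1"
proof -
  have "(\<Sum>i\<in>common. (\<alpha> i)\<^sup>2) \<le> (\<Sum>i<n. (\<alpha> i)\<^sup>2)" "(\<Sum>i\<in>common. (\<beta> i)\<^sup>2) \<le> (\<Sum>i<n. (\<beta> i)\<^sup>2)"
    by (intro sum_mono2; auto simp: common_def)+
  then show ?thesis
    using A.sum_\<alpha>_square B.sum_\<alpha>_square by (simp add: D_def)
qed

lemma sum_common_max_le: "(\<Sum>i\<in>common. max ((\<alpha> i)\<^sup>2) ((\<beta> i)\<^sup>2)) \<le> 2 * D\<^sup>2"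
proof -
  have "(\<Sum>i\<in>common. max ((\<alpha> i)\<^sup>2) ((\<beta> i)\<^sup>2)) \<le> (\<Sum>i\<in>common. (\<alpha> i)\<^sup>2 + (\<beta> i)\<^sup>2)"
    by (intro sum_mono) auto
  then show ?thesis
    using sum_common_square_le by (simp add: sum.distrib)
qed

lemma abs_cos_sim_le: "\<bar>cos_sim\<bar> \<le> D"
proof -
  have "cos_sim = (\<Sum>i\<in>common. \<alpha> i * \<beta> i)"
    unfolding sum_common by (intro sum.cong) auto
  then have "\<bar>cos_sim\<bar> \<le> (\<Sum>i\<in>common. \<bar>\<alpha> i * \<beta> i\<bar>)"
    by (simp add: sum_abs)
  also have "\<dots> \<le> (\<Sum>i\<in>common. ((\<alpha> i)\<^sup>2 + (\<beta> i)\<^sup>2) / 2)"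
  proof (intro sum_mono)
    fix i
    show "\<bar>\<alpha> i * \<beta> i\<bar> \<le> ((\<alpha> i)\<^sup>2 + (\<beta> i)\<^sup>2) / 2"
      using sum_squares_bound[of "\<bar>\<alpha> i\<bar>" "\<bar>\<beta> i\<bar>"] by (simp add: abs_mult)
  qed
  also have "\<dots> \<le> D\<^sup>2"
    using sum_common_square_le by (simp add: sum.distrib flip: sum_divide_distrib)
  also have "\<dots> \<le> D"
    using D_nonneg D_le_1 by (simp add: power2_eq_square mult_left_le_one_le)
  finally show ?thesis .
qed

lemma common_empty_if_D_eq_0: "D = 0 \<Longrightarrow> common = {}"
proof (rule ccontr)
  assume "D = 0" and "common \<noteq> {}"
  then obtain i where i: "i \<in> common" by auto
  have "0 < (\<alpha> i)\<^sup>2" using i by (simp add: mem_common_iff)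
  also have "(\<alpha> i)\<^sup>2 \<le> (\<Sum>i\<in>common. (\<alpha> i)\<^sup>2)"
    using i by (intro member_le_sum) (auto simp: common_def)
  also have "\<dots> \<le> D\<^sup>2" by (rule sum_common_square_le)
  finally show False using \<open>D = 0\<close> by simp
qed

lemma ratio_eq_0_if_common_empty:
  assumes "common = {}"
  shows "ratio j = 0"
proof (rule ccontr)
  assume "ratio j \<noteq> 0"
  then have j: "j \<in> abar_supp n L a" "j \<in> abar_supp n L b"
    by (auto simp: ratio_def split: if_splits)
  then have "j < n * L" using A.abar_supp_subset by auto
  note block = block_div_mod[OF this]
  have "j mod L < A.copies (j div L)" "j mod L < B.copies (j div L)"
    using j block A.mem_abar_supp_block[of "j div L" "j mod L"] B.mem_abar_supp_block[of "j div L" "j mod L"]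
    by simp_all
  then have "0 < A.copies (j div L)" "0 < B.copies (j div L)"
    by simp_all
  then have "j div L \<in> common"
    using block A.copies_pos_iff B.copies_pos_iff by (simp add: common_def)
  then show False using assms by simp
qed

lemma abar_supp_subset_U: "abar_supp n L a \<subseteq> U" "abar_supp n L b \<subseteq> U"
  by (auto simp: U_def)

lemma min_wmh_hash:
  assumes j: "strict_min_at U (\<lambda>k. h (i, k)) j"
  shows "min (wmh_hash n L a h i) (wmh_hash n L b h i) = h (i, j)"
proof -
  note A = A.wmh_strict_min_at[OF abar_supp_subset_U(1) j]
    and B = B.wmh_strict_min_at[OF abar_supp_subset_U(2) j]
  have "j \<in> abar_supp n L a \<or> j \<in> abar_supp n L b"
    using j by (simp add: strict_min_at_def U_def)
  then show ?thesis
  proof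
    assume "j \<in> abar_supp n L a"
    then show ?thesis
      using A(1) B(1,2) by (cases "j \<in> abar_supp n L b") (simp_all add: min_def)
  next
    assume "j \<in> abar_supp n L b"
    then show ?thesis
      using B(1) A(1,2) by (cases "j \<in> abar_supp n L a") (simp_all add: min_def)
  qed
qed

lemma wmh_ratio_term:
  assumes j: "strict_min_at U (\<lambda>k. h (i, k)) j"
  shows "(if wmh_hash n L a h i = wmh_hash n L b h i then 1 else 0) *
    (wmh_val n L a h i * wmh_val n L b h i / min ((wmh_val n L a h i)\<^sup>2) ((wmh_val n L b h i)\<^sup>2))
    = ratio j"
proof -
  note A = A.wmh_strict_min_at[OF abar_supp_subset_U(1) j]
    and B = B.wmh_strict_min_at[OF abar_supp_subset_U(2) j]
  have "j \<in> abar_supp n L a \<or> j \<in> abar_supp n L b"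
    using j by (simp add: strict_min_at_def U_def)
  then consider "j \<in> abar_supp n L a" "j \<in> abar_supp n L b"
    | "j \<in> abar_supp n L a" "j \<notin> abar_supp n L b" | "j \<notin> abar_supp n L a" "j \<in> abar_supp n L b"
    by blast
  then show ?thesis
  proof cases
    case 1
    then show ?thesis using A(1,3) B(1,3) by (simp add: ratio_def)
  next
    case 2
    then have "wmh_hash n L a h i \<noteq> wmh_hash n L b h i" using A(1) B(2) by simp
    then show ?thesis using 2 by (simp add: ratio_def)
  next
    case 3
    then have "wmh_hash n L a h i \<noteq> wmh_hash n L b h i" using A(2) B(1) by simp
    then show ?thesis using 3 by (simp add: ratio_def)
  qed
qed

lemma wmh_estimate_eq:
  assumes "\<forall>i<m. \<exists>j. strict_min_at U (\<lambda>k. h (i, k)) j"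
  shows "wmh_estimate m L (wmh_sketch n L a h) (wmh_sketch n L b h) = vnorm n a * vnorm n b *
    (1 / real L * (1 / ((\<Sum>i<m. at_strict_min U (\<lambda>k. h (i, k)) (\<lambda>k. h (i, k))) / m) - 1)
      * ((\<Sum>i<m. at_strict_min U (\<lambda>k. h (i, k)) ratio) / m))"
proof -
  have "(\<Sum>i<m. min (wmh_hash n L a h i) (wmh_hash n L b h i))
      = (\<Sum>i<m. at_strict_min U (\<lambda>k. h (i, k)) (\<lambda>k. h (i, k)))"
  proof (intro sum.cong refl)
    fix i assume "i \<in> {..<m}"
    then obtain j where j: "strict_min_at U (\<lambda>k. h (i, k)) j" using assms by auto
    show "min (wmh_hash n L a h i) (wmh_hash n L b h i) = at_strict_min U (\<lambda>k. h (i, k)) (\<lambda>k. h (i, k))"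
      unfolding min_wmh_hash[OF j] at_strict_min_eq[OF finite_U j] ..
  qed
  moreover have "(\<Sum>i<m. (if wmh_hash n L a h i = wmh_hash n L b h i then 1 else 0) *
      (wmh_val n L a h i * wmh_val n L b h i / min ((wmh_val n L a h i)\<^sup>2) ((wmh_val n L b h i)\<^sup>2)))
      = (\<Sum>i<m. at_strict_min U (\<lambda>k. h (i, k)) ratio)"
  proof (intro sum.cong refl)
    fix i assume "i \<in> {..<m}"
    then obtain j where j: "strict_min_at U (\<lambda>k. h (i, k)) j" using assms by auto
    show "(if wmh_hash n L a h i = wmh_hash n L b h i then 1 else 0) *
        (wmh_val n L a h i * wmh_val n L b h i / min ((wmh_val n L a h i)\<^sup>2) ((wmh_val n L b h i)\<^sup>2))
      = at_strict_min U (\<lambda>k. h (i, k)) ratio"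
      unfolding wmh_ratio_term[OF j] at_strict_min_eq[OF finite_U j] ..
  qed
  ultimately show ?thesis
    by (simp add: wmh_estimate_def wmh_sketch_def Let_def)
qed

end

section \<open>Accuracy of the estimator\<close>

lemma abs_inverse_diff_le:
  fixes y \<nu> \<delta> :: real
  assumes "0 < \<nu>" "0 < \<delta>" "\<delta> \<le> 1 / 2" and y: "\<bar>y - \<nu>\<bar> < \<delta> * \<nu>"
  shows "\<bar>1 / y - 1 / \<nu>\<bar> \<le> 2 * \<delta> / \<nu>"
proof -
  have "\<delta> * \<nu> \<le> \<nu> / 2" using assms mult_right_mono[of \<delta> "1 / 2" \<nu>] by simp
  then have y_lo: "\<nu> / 2 < y" using y by (auto simp: abs_less_iff)
  then have y_pos: "0 < y" using assms by simp
  have "\<bar>1 / y - 1 / \<nu>\<bar> = \<bar>y - \<nu>\<bar> / (y * \<nu>)"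
    using y_pos assms by (simp add: field_simps abs_div abs_mult abs_minus_commute)
  also have "\<dots> \<le> \<delta> * \<nu> / (y * \<nu>)"
    using y y_pos assms by (intro divide_right_mono) auto
  also have "\<dots> = \<delta> / y" using assms by simp
  also have "\<dots> \<le> \<delta> / (\<nu> / 2)"
    using y_lo assms by (intro divide_left_mono) auto
  finally show ?thesis by (simp add: mult.commute)
qed

lemma estimate_error_bound:
  fixes L M D \<epsilon> p x y :: real
  assumes L: "1 \<le> L" "L \<le> M" and \<epsilon>: "0 < \<epsilon>" "\<epsilon> < 1" and D: "0 \<le> D" "\<bar>p\<bar> \<le> D"
    and y: "\<bar>y - 1 / (M + 1)\<bar> < \<epsilon> / 32 * (1 / (M + 1))"
    and x: "\<bar>M / L * x - p\<bar> \<le> \<epsilon> * D / 4"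
  shows "\<bar>1 / L * (1 / y - 1) * x - p\<bar> \<le> \<epsilon> * D"
proof -
  have "\<bar>1 / y - (M + 1)\<bar> \<le> \<epsilon> / 16 * (M + 1)"
    using abs_inverse_diff_le[OF _ _ _ y] L \<epsilon> by simp
  moreover have "\<epsilon> / 16 * (M + 1) \<le> \<epsilon> / 8 * M" using L \<epsilon> by simp
  moreover have "(1 / y - 1) - M = 1 / y - (M + 1)" by simp
  ultimately have "\<bar>(1 / y - 1) - M\<bar> \<le> \<epsilon> / 8 * M" by linarith
  then have "\<bar>(1 / y - 1) - M\<bar> / L \<le> \<epsilon> / 8 * M / L"
    using L by (intro divide_right_mono) auto
  moreover have "1 / L * (1 / y - 1) - M / L = ((1 / y - 1) - M) / L"
    using L by (simp add: field_simps)
  then have "\<bar>1 / L * (1 / y - 1) - M / L\<bar> = \<bar>(1 / y - 1) - M\<bar> / L"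
    using L by (simp add: abs_div)
  ultimately have est: "\<bar>1 / L * (1 / y - 1) - M / L\<bar> \<le> \<epsilon> / 8 * (M / L)"
    by simp
  have "\<epsilon> * D \<le> D" using D \<epsilon> by (simp add: mult_left_le_one_le)
  then have Mx: "\<bar>M / L * x\<bar> \<le> 2 * D"
    using abs_triangle_ineq2[of "M / L * x" p] x D by linarith
  have "1 / L * (1 / y - 1) * x - p = (M / L * x - p) + (1 / L * (1 / y - 1) - M / L) * x"
    by (simp add: algebra_simps)
  then have "\<bar>1 / L * (1 / y - 1) * x - p\<bar> \<le> \<bar>M / L * x - p\<bar> + \<bar>1 / L * (1 / y - 1) - M / L\<bar> * \<bar>x\<bar>"
    by (metis abs_mult abs_triangle_ineq)
  moreover have "\<bar>1 / L * (1 / y - 1) - M / L\<bar> * \<bar>x\<bar> \<le> \<epsilon> / 8 * (M / L) * \<bar>x\<bar>"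
    using est by (intro mult_right_mono) auto
  moreover have "\<epsilon> / 8 * (M / L) * \<bar>x\<bar> = \<epsilon> / 8 * \<bar>M / L * x\<bar>"
    using L by (simp add: abs_mult)
  moreover have "\<epsilon> / 8 * \<bar>M / L * x\<bar> \<le> \<epsilon> / 8 * (2 * D)"
    using Mx \<epsilon> by (intro mult_left_mono) auto
  moreover have "0 \<le> \<epsilon> * D" using \<epsilon> D by simp
  ultimately show ?thesis using x by linarith
qed

lemma sets_Collect_abs_diff:
  fixes f :: "'a \<Rightarrow> real"
  assumes "f \<in> borel_measurable M"
  shows "{x \<in> space M. t \<le> \<bar>f x - c\<bar>} \<in> sets M" and "{x \<in> space M. t < \<bar>f x - c\<bar>} \<in> sets M"
proof -
  have "(\<lambda>x. \<bar>f x - c\<bar>) \<in> borel_measurable M"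
    using assms by (intro borel_measurable_abs borel_measurable_diff borel_measurable_const)
  then show "{x \<in> space M. t \<le> \<bar>f x - c\<bar>} \<in> sets M" "{x \<in> space M. t < \<bar>f x - c\<bar>} \<in> sets M"
    by (rule borel_measurable_le[OF borel_measurable_const] borel_measurable_less[OF borel_measurable_const])+
qed

text \<open>\<open>6144 = 6 * 32\<^sup>2\<close>: Chebyshev's inequality for the mean of the minima at relative accuracy
  \<open>\<epsilon> / 32\<close> then fails with probability at most 1/6.\<close>
locale wmh_setting = discretized_pair n L a b for n L :: nat and a b :: "nat \<Rightarrow> real" +
  fixes m :: nat and \<epsilon> :: real
  assumes \<epsilon>: "0 < \<epsilon>" "\<epsilon> < 1" and m_large: "6144 / \<epsilon>\<^sup>2 \<le> real m"
begin

sublocale R: uniform_rows "{0..<m}" "{0..<n * L}" U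
proof
  show "finite {0..<m}" "finite {0..<n * L}" by simp_all
  show "U \<subseteq> {0..<n * L}" using U_subset by (simp add: lessThan_atLeast0)
  show "U \<noteq> {}" by (rule U_nonempty)
qed

lemma m_\<epsilon>: "6144 \<le> real m * \<epsilon>\<^sup>2"
  using m_large \<epsilon> by (simp add: divide_le_eq)

lemma m_pos: "0 < m"
  using m_\<epsilon> by (cases m) auto

definition X_mean :: "(nat \<times> nat \<Rightarrow> real) \<Rightarrow> real" where
  "X_mean h = (\<Sum>i\<in>{0..<m}. at_strict_min U (\<lambda>k. h (i, k)) ratio) / real m"

definition Y_mean :: "(nat \<times> nat \<Rightarrow> real) \<Rightarrow> real" where
  "Y_mean h = (\<Sum>i\<in>{0..<m}. at_strict_min U (\<lambda>k. h (i, k)) (\<lambda>k. h (i, k))) / real m"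

lemma X_mean_measurable: "X_mean \<in> borel_measurable R.P"
proof -
  have "(\<lambda>h. at_strict_min U (\<lambda>k. h (i, k)) ratio) \<in> borel_measurable R.P" if "i \<in> {0..<m}" for i
    using R.expectation_at_strict_min_row(1)[OF that] by (rule borel_measurable_integrable)
  then show ?thesis
    unfolding X_mean_def[abs_def] by (intro borel_measurable_divide borel_measurable_sum borel_measurable_const)
qed

lemma Y_mean_measurable: "Y_mean \<in> borel_measurable R.P"
proof -
  have "(\<lambda>h. at_strict_min U (\<lambda>k. h (i, k)) (\<lambda>k. h (i, k))) \<in> borel_measurable R.P" if "i \<in> {0..<m}" for i
    using R.moments_row_minimum(1)[OF that] by (rule borel_measurable_integrable)
  then show ?thesis
    unfolding Y_mean_def[abs_def] by (intro borel_measurable_divide borel_measurable_sum borel_measurable_const)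
qed

lemma prob_X_mean_chebyshev:
  fixes t :: real
  assumes t: "0 < t"
  shows "R.prob {h \<in> space R.P. t \<le> \<bar>X_mean h - L * cos_sim / card U\<bar>}
    \<le> ((\<Sum>j\<in>U. (ratio j)\<^sup>2) / card U - (L * cos_sim / card U)\<^sup>2) / (m * t\<^sup>2)"
proof -
  have "R.prob {h \<in> space R.P. t \<le> \<bar>(\<Sum>i\<in>{0..<m}. at_strict_min U (\<lambda>k. h (i, k)) ratio) / card {0..<m}
      - L * cos_sim / card U\<bar>}
    \<le> ((\<Sum>j\<in>U. (ratio j)\<^sup>2) / card U - (L * cos_sim / card U)\<^sup>2) / (card {0..<m} * t\<^sup>2)"
  proof (rule R.prob_sample_mean_deviation)
    show "finite {0..<m}" "{0..<m} \<noteq> {}" using m_pos by auto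
    show "R.indep_vars (\<lambda>_. borel) (\<lambda>i h. at_strict_min U (\<lambda>k. h (i, k)) ratio) {0..<m}"
      using R.indep_vars_at_strict_min_rows[of ratio 0] by simp
    fix i assume i: "i \<in> {0..<m}"
    show "integrable R.P (\<lambda>h. at_strict_min U (\<lambda>k. h (i, k)) ratio)"
      by (rule R.expectation_at_strict_min_row(1)[OF i])
    show "integrable R.P (\<lambda>h. (at_strict_min U (\<lambda>k. h (i, k)) ratio)\<^sup>2)"
      unfolding at_strict_min_square[OF finite_U] by (rule R.expectation_at_strict_min_row(1)[OF i])
    show "R.expectation (\<lambda>h. at_strict_min U (\<lambda>k. h (i, k)) ratio) = L * cos_sim / card U"
      unfolding R.expectation_at_strict_min_row(2)[OF i] sum_ratio ..
    show "R.expectation (\<lambda>h. (at_strict_min U (\<lambda>k. h (i, k)) ratio)\<^sup>2) = (\<Sum>j\<in>U. (ratio j)\<^sup>2) / card U"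
      unfolding at_strict_min_square[OF finite_U] by (rule R.expectation_at_strict_min_row(2)[OF i])
  qed (rule t)
  then show ?thesis by (simp add: X_mean_def)
qed

lemma prob_X_mean_deviation:
  "R.prob {h \<in> space R.P. \<epsilon> * D * L / (4 * real (card U)) < \<bar>X_mean h - L * cos_sim / card U\<bar>} \<le> 1 / 96"
proof (cases "D = 0")
  case True
  then have "ratio = (\<lambda>_. 0)" and "cos_sim = 0"
    using ratio_eq_0_if_common_empty common_empty_if_D_eq_0 abs_cos_sim_le by auto
  then show ?thesis using True by (simp add: X_mean_def at_strict_min_def)
next
  case False
  define t where "t = \<epsilon> * D * L / (4 * real (card U))"
  have D: "0 < D" using False D_nonneg by simp
  then have t: "0 < t" using \<epsilon> card_U_bounds A.L_pos by (simp add: t_def)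
  have "R.prob {h \<in> space R.P. t < \<bar>X_mean h - L * cos_sim / card U\<bar>}
      \<le> R.prob {h \<in> space R.P. t \<le> \<bar>X_mean h - L * cos_sim / card U\<bar>}"
    by (rule R.finite_measure_mono[OF _ sets_Collect_abs_diff(1)[OF X_mean_measurable]]) auto
  also have "\<dots> \<le> ((\<Sum>j\<in>U. (ratio j)\<^sup>2) / card U - (L * cos_sim / card U)\<^sup>2) / (m * t\<^sup>2)"
    by (rule prob_X_mean_chebyshev[OF t])
  also have "\<dots> \<le> (L * (\<Sum>i\<in>common. max ((\<alpha> i)\<^sup>2) ((\<beta> i)\<^sup>2)) / card U) / (m * t\<^sup>2)"
    using t m_pos by (intro divide_right_mono) (auto simp: sum_ratio_square)
  also have "\<dots> \<le> (L * (2 * D\<^sup>2) / card U) / (m * t\<^sup>2)"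
    using sum_common_max_le by (intro divide_right_mono mult_left_mono) auto
  also have "\<dots> = 64 / (m * \<epsilon>\<^sup>2) * (card U / (2 * L))"
    using D \<epsilon> card_U_bounds A.L_pos by (simp add: t_def field_simps power2_eq_square)
  also have "\<dots> \<le> 64 / 6144 * 1"
    using m_\<epsilon> card_U_bounds A.L_pos \<epsilon> by (intro mult_mono divide_left_mono) auto
  finally show ?thesis by (simp add: t_def)
qed

lemma prob_Y_mean_chebyshev:
  defines "\<nu> \<equiv> 1 / (real (card U) + 1)"
  shows "R.prob {h \<in> space R.P. \<epsilon> / 32 * \<nu> \<le> \<bar>Y_mean h - \<nu>\<bar>}
    \<le> (2 / ((real (card U) + 1) * (real (card U) + 2)) - \<nu>\<^sup>2) / (m * (\<epsilon> / 32 * \<nu>)\<^sup>2)"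
proof -
  have "R.prob {h \<in> space R.P. \<epsilon> / 32 * \<nu> \<le> \<bar>(\<Sum>i\<in>{0..<m}. at_strict_min U (\<lambda>k. h (i, k)) (\<lambda>k. h (i, k)))
        / card {0..<m} - \<nu>\<bar>}
      \<le> (2 / ((real (card U) + 1) * (real (card U) + 2)) - \<nu>\<^sup>2) / (card {0..<m} * (\<epsilon> / 32 * \<nu>)\<^sup>2)"
  proof (rule R.prob_sample_mean_deviation)
    show "finite {0..<m}" "{0..<m} \<noteq> {}" using m_pos by auto
    show "R.indep_vars (\<lambda>_. borel) (\<lambda>i h. at_strict_min U (\<lambda>k. h (i, k)) (\<lambda>k. h (i, k))) {0..<m}"
      using R.indep_vars_at_strict_min_rows[of "\<lambda>_. 1" 1] by simp
    fix i assume i: "i \<in> {0..<m}"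
    show "integrable R.P (\<lambda>h. at_strict_min U (\<lambda>k. h (i, k)) (\<lambda>k. h (i, k)))"
      and "integrable R.P (\<lambda>h. (at_strict_min U (\<lambda>k. h (i, k)) (\<lambda>k. h (i, k)))\<^sup>2)"
      using R.moments_row_minimum[OF i] by simp_all
    show "R.expectation (\<lambda>h. at_strict_min U (\<lambda>k. h (i, k)) (\<lambda>k. h (i, k))) = \<nu>"
      and "R.expectation (\<lambda>h. (at_strict_min U (\<lambda>k. h (i, k)) (\<lambda>k. h (i, k)))\<^sup>2)
        = 2 / ((real (card U) + 1) * (real (card U) + 2))"
      using R.moments_row_minimum[OF i] by (simp_all add: \<nu>_def)
  qed (use \<epsilon> in \<open>simp add: \<nu>_def\<close>)
  then show ?thesis by (simp add: Y_mean_def)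
qed

lemma prob_Y_mean_deviation:
  "R.prob {h \<in> space R.P. \<epsilon> / 32 * (1 / (real (card U) + 1)) \<le> \<bar>Y_mean h - 1 / (real (card U) + 1)\<bar>} \<le> 1 / 6"
proof -
  define \<nu> where "\<nu> = 1 / (real (card U) + 1)"
  have \<nu>: "0 < \<nu>" by (simp add: \<nu>_def)
  have "2 / ((real (card U) + 1) * (real (card U) + 2)) \<le> 2 / ((real (card U) + 1) * (real (card U) + 1))"
    by (intro divide_left_mono mult_left_mono) auto
  then have "2 / ((real (card U) + 1) * (real (card U) + 2)) - \<nu>\<^sup>2 \<le> \<nu>\<^sup>2"
    by (simp add: \<nu>_def power2_eq_square)
  then have "R.prob {h \<in> space R.P. \<epsilon> / 32 * \<nu> \<le> \<bar>Y_mean h - \<nu>\<bar>} \<le> \<nu>\<^sup>2 / (m * (\<epsilon> / 32 * \<nu>)\<^sup>2)"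
    using prob_Y_mean_chebyshev m_pos \<epsilon> \<nu> unfolding \<nu>_def[symmetric]
    by (elim order.trans, intro divide_right_mono) auto
  also have "\<dots> = 1024 / (m * \<epsilon>\<^sup>2)"
    using \<nu> by (simp add: field_simps power2_eq_square)
  also have "\<dots> \<le> 1024 / 6144"
    using m_\<epsilon> \<epsilon> by (intro divide_left_mono) auto
  finally show ?thesis
    by (simp add: \<nu>_def)
qed

lemma prob_no_strict_min:
  "{h \<in> space R.P. \<not> (\<forall>i\<in>{..<m}. \<exists>j\<in>U. strict_min_at U (\<lambda>k. h (i, k)) j)} \<in> R.events"
  "R.prob {h \<in> space R.P. \<not> (\<forall>i\<in>{..<m}. \<exists>j\<in>U. strict_min_at U (\<lambda>k. h (i, k)) j)} = 0"
proof -
  have pred_row: "Measurable.pred R.P (\<lambda>h. strict_min_at U (\<lambda>k. h (i, k)) j)" if "i < m" for i j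
    using U_subset that by (intro pred_strict_min_at_row finite_U) auto
  have "Measurable.pred R.P (\<lambda>h. \<forall>i\<in>{..<m}. \<exists>j\<in>U. strict_min_at U (\<lambda>k. h (i, k)) j)"
    by (intro pred_intros_finite(3) pred_intros_finite(4) finite_lessThan finite_U pred_row) simp
  then show events: "{h \<in> space R.P. \<not> (\<forall>i\<in>{..<m}. \<exists>j\<in>U. strict_min_at U (\<lambda>k. h (i, k)) j)} \<in> R.events"
    unfolding pred_def by (rule sets.sets_Collect_neg)
  have "AE h in R.P. \<forall>i\<in>{..<m}. \<exists>j. strict_min_at U (\<lambda>k. h (i, k)) j"
    by (intro eventually_ball_finite ballI R.AE_ex_strict_min_at_row) auto
  then have "AE h in R.P. h \<notin> {h \<in> space R.P. \<not> (\<forall>i\<in>{..<m}. \<exists>j\<in>U. strict_min_at U (\<lambda>k. h (i, k)) j)}"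
    by eventually_elim (auto simp: strict_min_at_def)
  then show "R.prob {h \<in> space R.P. \<not> (\<forall>i\<in>{..<m}. \<exists>j\<in>U. strict_min_at U (\<lambda>k. h (i, k)) j)} = 0"
    using R.prob_eq_0[OF events] by simp
qed

lemma estimate_error_if_concentrated:
  assumes winners: "\<forall>i\<in>{..<m}. \<exists>j\<in>U. strict_min_at U (\<lambda>k. h (i, k)) j"
    and X: "\<bar>X_mean h - L * cos_sim / card U\<bar> \<le> \<epsilon> * D * L / (4 * real (card U))"
    and Y: "\<bar>Y_mean h - 1 / (real (card U) + 1)\<bar> < \<epsilon> / 32 * (1 / (real (card U) + 1))"
  shows "\<bar>wmh_estimate m L (wmh_sketch n L a h) (wmh_sketch n L b h) - vinner n a b\<bar>
    \<le> \<epsilon> * max (restr_norm common a * vnorm n b) (vnorm n a * restr_norm common b)"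
proof -
  have L: "0 < real L" "real L \<le> real (card U)" using card_U_bounds A.L_pos by auto
  have "card U / L * X_mean h - cos_sim = card U / L * (X_mean h - L * cos_sim / card U)"
    using L by (simp add: field_simps)
  then have "\<bar>card U / L * X_mean h - cos_sim\<bar> = card U / L * \<bar>X_mean h - L * cos_sim / card U\<bar>"
    by (simp add: abs_mult)
  also have "\<dots> \<le> card U / L * (\<epsilon> * D * L / (4 * real (card U)))"
    using X L by (intro mult_left_mono) auto
  also have "\<dots> = \<epsilon> * D / 4" using L by simp
  finally have error: "\<bar>1 / L * (1 / Y_mean h - 1) * X_mean h - cos_sim\<bar> \<le> \<epsilon> * D"
    using estimate_error_bound[OF _ _ \<epsilon> D_nonneg abs_cos_sim_le Y] card_U_bounds A.L_pos by auto
  have est: "wmh_estimate m L (wmh_sketch n L a h) (wmh_sketch n L b h)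
      = vnorm n a * vnorm n b * (1 / L * (1 / Y_mean h - 1) * X_mean h)"
    using winners by (subst wmh_estimate_eq) (auto simp: X_mean_def Y_mean_def atLeast0LessThan)
  have norms: "0 < vnorm n a * vnorm n b"
    using A.vnorm_pos B.vnorm_pos by simp
  have "\<bar>wmh_estimate m L (wmh_sketch n L a h) (wmh_sketch n L b h) - vinner n a b\<bar>
      = vnorm n a * vnorm n b * \<bar>1 / L * (1 / Y_mean h - 1) * X_mean h - cos_sim\<bar>"
    unfolding est vinner_eq right_diff_distrib[symmetric] abs_mult
    using A.vnorm_pos B.vnorm_pos by simp
  also have "\<dots> \<le> vnorm n a * vnorm n b * (\<epsilon> * D)"
    using error norms by (intro mult_left_mono) auto
  also have "\<dots> = \<epsilon> * max (restr_norm common a * vnorm n b) (vnorm n a * restr_norm common b)"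
    using A.vnorm_pos B.vnorm_pos \<epsilon>
    by (simp add: D_def A.restr_norm_eq B.restr_norm_eq max_mult_distrib_left max_mult_distrib_right mult_ac)
  finally show ?thesis .
qed

lemma wmh_estimate_concentration:
  "\<exists>A\<in>sets (hash_space m n L). 2 / 3 \<le> measure (hash_space m n L) A \<and>
    (\<forall>h\<in>A. \<bar>wmh_estimate m L (wmh_sketch n L a h) (wmh_sketch n L b h) - vinner n a b\<bar>
      \<le> \<epsilon> * max (restr_norm {i. i < n \<and> a i \<noteq> 0 \<and> b i \<noteq> 0} a * vnorm n b)
                  (vnorm n a * restr_norm {i. i < n \<and> a i \<noteq> 0 \<and> b i \<noteq> 0} b))"
proof -
  define BX where "BX = {h \<in> space R.P. \<epsilon> * D * L / (4 * real (card U)) < \<bar>X_mean h - L * cos_sim / card U\<bar>}"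
  define BY where "BY = {h \<in> space R.P.
    \<epsilon> / 32 * (1 / (real (card U) + 1)) \<le> \<bar>Y_mean h - 1 / (real (card U) + 1)\<bar>}"
  define BN where "BN = {h \<in> space R.P. \<not> (\<forall>i\<in>{..<m}. \<exists>j\<in>U. strict_min_at U (\<lambda>k. h (i, k)) j)}"
  have events: "BX \<in> R.events" "BY \<in> R.events" "BN \<in> R.events"
    unfolding BX_def BY_def BN_def
    by (rule sets_Collect_abs_diff(2)[OF X_mean_measurable] sets_Collect_abs_diff(1)[OF Y_mean_measurable]
        prob_no_strict_min(1))+
  have "R.prob (BX \<union> BY \<union> BN) \<le> R.prob (BX \<union> BY) + R.prob BN"
    using events by (intro measure_Un_le sets.Un)
  moreover have "R.prob (BX \<union> BY) \<le> R.prob BX + R.prob BY"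
    using events by (intro measure_Un_le)
  moreover have "R.prob BX \<le> 1 / 96" "R.prob BY \<le> 1 / 6" "R.prob BN = 0"
    unfolding BX_def BY_def BN_def
    by (rule prob_X_mean_deviation prob_Y_mean_deviation prob_no_strict_min(2))+
  ultimately have "R.prob (BX \<union> BY \<union> BN) \<le> 1 / 3"
    by linarith
  then have "2 / 3 \<le> R.prob (space R.P - (BX \<union> BY \<union> BN))"
    using events by (subst R.prob_compl) (auto intro: sets.Un)
  moreover have "space R.P - (BX \<union> BY \<union> BN) \<in> R.events"
    using events by (intro sets.Diff sets.top sets.Un)
  moreover have "\<bar>wmh_estimate m L (wmh_sketch n L a h) (wmh_sketch n L b h) - vinner n a b\<bar>
      \<le> \<epsilon> * max (restr_norm common a * vnorm n b) (vnorm n a * restr_norm common b)"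
    if "h \<in> space R.P - (BX \<union> BY \<union> BN)" for h
    using that unfolding BX_def BY_def BN_def by (intro estimate_error_if_concentrated) auto
  ultimately show ?thesis
    unfolding hash_space_def common_def by blast
qed

end

theorem lemma2:
  shows "\<exists>C::real. \<forall>(n::nat) (L::nat) (\<epsilon>::real) (m::nat) (a::nat \<Rightarrow> real) (b::nat \<Rightarrow> real).
    L > 0 \<and> 0 < \<epsilon> \<and> \<epsilon> < 1 \<and>
    (\<exists>i<n. a i \<noteq> 0) \<and> (\<exists>i<n. b i \<noteq> 0) \<and>
    (\<forall>i<n. \<exists>k::nat. (a i)^2 / (vnorm n a)^2 = real k / real L) \<and>
    (\<forall>i<n. \<exists>k::nat. (b i)^2 / (vnorm n b)^2 = real k / real L) \<and>
    real m \<ge> C / \<epsilon>^2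
    \<longrightarrow> (\<exists>A \<in> sets (hash_space m n L).
          measure (hash_space m n L) A \<ge> 2/3 \<and>
          (\<forall>h\<in>A. \<bar>wmh_estimate m L (wmh_sketch n L a h) (wmh_sketch n L b h) - vinner n a b\<bar>
             \<le> \<epsilon> * max (restr_norm {i. i < n \<and> a i \<noteq> 0 \<and> b i \<noteq> 0} a * vnorm n b)
                         (vnorm n a * restr_norm {i. i < n \<and> a i \<noteq> 0 \<and> b i \<noteq> 0} b)))"
proof (intro exI[of _ 6144] allI impI)
  fix n L :: nat and \<epsilon> :: real and m :: nat and a b :: "nat \<Rightarrow> real"
  assume "L > 0 \<and> 0 < \<epsilon> \<and> \<epsilon> < 1 \<and> (\<exists>i<n. a i \<noteq> 0) \<and> (\<exists>i<n. b i \<noteq> 0) \<and>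
    (\<forall>i<n. \<exists>k::nat. (a i)^2 / (vnorm n a)^2 = real k / real L) \<and>
    (\<forall>i<n. \<exists>k::nat. (b i)^2 / (vnorm n b)^2 = real k / real L) \<and> real m \<ge> 6144 / \<epsilon>^2"
  then interpret wmh_setting n L a b m \<epsilon>
    by unfold_locales auto
  show "\<exists>A \<in> sets (hash_space m n L). measure (hash_space m n L) A \<ge> 2/3 \<and>
      (\<forall>h\<in>A. \<bar>wmh_estimate m L (wmh_sketch n L a h) (wmh_sketch n L b h) - vinner n a b\<bar>
         \<le> \<epsilon> * max (restr_norm {i. i < n \<and> a i \<noteq> 0 \<and> b i \<noteq> 0} a * vnorm n b)
                     (vnorm n a * restr_norm {i. i < n \<and> a i \<noteq> 0 \<and> b i \<noteq> 0} b))"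
    by (rule wmh_estimate_concentration)
qed

end
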